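(* Consider the MPS model and its neural tangent kernel $K_D$ described in the context. For any two inputs $\mathbf{x}^{(i)},\mathbf{x}^{(j)}\in\mathbb{R}^n$, as the bond dimensions $D_1,\dots,D_n\to\infty$ sequentially, $$K_D(\mathbf{x}^{(i)},\mathbf{x}^{(j)})\xrightarrow{\text{Prob.}}\sum_{k=1}^n\phi_k(x^{(i)}_k)\cdot\phi_k(x^{(j)}_k)\prod_{l=1,\,l\neq k}^{n}\sigma_l^2\,\phi_l(x^{(i)}_l)\cdot\phi_l(x^{(j)}_l),$$ a deterministic (static) limit.
   Context: Fix $n\ge 1$, finite physical dimensions $d_1,\dots,d_n$, feature maps $\phi_i:\mathbb{R}\to\mathbb{R}^{d_i}$ with components $\phi_i^{s}$, and constants $\sigma_1,\dots,\sigma_n>0$; $\cdot$ is the Euclidean inner product. For bond dimensions $D_1,\dots,D_n$ put $D_{n+1}=D_1$. The MPS parameters are tensors $A^{(i)}_{s;a,b}$, $s\le d_i$, $a\le D_i$, $b\le D_{i+1}$, initialized with all entries independent, $A^{(i)}_{s;a,b}\sim\mathcal{N}(0,\sigma_i^2/\sqrt{D_iD_{i+1}})$. The MPS output is $\Psi(\mathbf{x})=\sum_{s_1,\dots,s_n}\sum_{a_1,\dots,a_n}A^{(1)}_{s_1;a_1a_2}\cdots A^{(n)}_{s_n;a_na_1}\prod_{i=1}^n\phi_i^{s_i}(x_i)$ for $\mathbf{x}=(x_1,\dots,x_n)$. With learning rates $\eta_k=(D_kD_{k+1})^{-1/2}$, the neural tangent kernel (NTK) of the MPS is $$K_D(\mathbf{x},\mathbf{x}')=\sum_{k=1}^n\eta_k\sum_{s\le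 d_k}\sum_{a\le D_k}\sum_{b\le D_{k+1}}\frac{\partial\Psi(\mathbf{x})}{\partial A^{(k)}_{s;a,b}}\,\frac{\partial\Psi(\mathbf{x}')}{\partial A^{(k)}_{s;a,b}},$$ evaluated at the random initialization. "Sequentially" means iterated limits, the bond dimensions being sent to infinity one after another. *)

theory Defs
  imports "HOL-Probability.Probability"
begin

text \<open>Sites are indexed 0..n-1 (site i corresponds to the paper's site i+1).
  Bond dimensions D :: nat => nat, D i for i < n; the cyclic convention
  D_{n+1} = D_1 is realised by the successor index mps_nxt.\<close>

definition mps_nxt :: "nat \<Rightarrow> nat \<Rightarrow> nat" where
  "mps_nxt n i = Suc i mod n"

text \<open>Parameters: A (i, s, a, b) = A^{(i)}_{s;a,b}. Feature maps: phi i t s = phi_i^s(t).\<close>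

definition mps :: "nat \<Rightarrow> (nat \<Rightarrow> nat) \<Rightarrow> (nat \<Rightarrow> real \<Rightarrow> nat \<Rightarrow> real) \<Rightarrow> (nat \<Rightarrow> nat)
    \<Rightarrow> (nat \<times> nat \<times> nat \<times> nat \<Rightarrow> real) \<Rightarrow> (nat \<Rightarrow> real) \<Rightarrow> real" where
  "mps n d phi D A x =
     (\<Sum>s\<in>PiE {..<n} (\<lambda>i. {..<d i}). \<Sum>a\<in>PiE {..<n} (\<lambda>i. {..<D i}).
        \<Prod>i<n. A (i, s i, a i, a (mps_nxt n i)) * phi i (x i) (s i))"

definition mps_pd :: "nat \<Rightarrow> (nat \<Rightarrow> nat) \<Rightarrow> (nat \<Rightarrow> real \<Rightarrow> nat \<Rightarrow> real) \<Rightarrow> (nat \<Rightarrow> nat)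
    \<Rightarrow> (nat \<times> nat \<times> nat \<times> nat \<Rightarrow> real) \<Rightarrow> nat \<times> nat \<times> nat \<times> nat \<Rightarrow> (nat \<Rightarrow> real) \<Rightarrow> real" where
  "mps_pd n d phi D A idx x = deriv (\<lambda>t. mps n d phi D (A(idx := t)) x) (A idx)"

definition mps_ntk :: "nat \<Rightarrow> (nat \<Rightarrow> nat) \<Rightarrow> (nat \<Rightarrow> real \<Rightarrow> nat \<Rightarrow> real) \<Rightarrow> (nat \<Rightarrow> nat)
    \<Rightarrow> (nat \<times> nat \<times> nat \<times> nat \<Rightarrow> real) \<Rightarrow> (nat \<Rightarrow> real) \<Rightarrow> (nat \<Rightarrow> real) \<Rightarrow> real" where
  "mps_ntk n d phi D A x x' =
     (\<Sum>k<n. (1 / sqrt (real (D k * D (mps_nxt n k)))) *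
        (\<Sum>s<d k. \<Sum>a<D k. \<Sum>b<D (mps_nxt n k).
           mps_pd n d phi D A (k, s, a, b) x * mps_pd n d phi D A (k, s, a, b) x'))"

definition mps_idx :: "nat \<Rightarrow> (nat \<Rightarrow> nat) \<Rightarrow> (nat \<Rightarrow> nat) \<Rightarrow> (nat \<times> nat \<times> nat \<times> nat) set" where
  "mps_idx n d D = {(i, s, a, b). i < n \<and> s < d i \<and> a < D i \<and> b < D (mps_nxt n i)}"

definition mps_init :: "nat \<Rightarrow> (nat \<Rightarrow> nat) \<Rightarrow> (nat \<Rightarrow> real) \<Rightarrow> (nat \<Rightarrow> nat)
    \<Rightarrow> (nat \<times> nat \<times> nat \<times> nat \<Rightarrow> real) measure" where
  "mps_init n d \<sigma> D = PiM (mps_idx n d D) (\<lambda>(i, s, a, b).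
      density lborel (normal_density 0 (sqrt ((\<sigma> i)\<^sup>2 / sqrt (real (D i * D (mps_nxt n i)))))))"

text \<open>Iterated (sequential) eventually: seq_eventually m D P means
  for all sufficiently large D_{m-1}, ..., for all sufficiently large D_0, P D,
  i.e. D_0 is sent to infinity first, then D_1, ..., finally D_{m-1}.\<close>
fun seq_eventually :: "nat \<Rightarrow> (nat \<Rightarrow> nat) \<Rightarrow> ((nat \<Rightarrow> nat) \<Rightarrow> bool) \<Rightarrow> bool" where
  "seq_eventually 0 D P = P D"
| "seq_eventually (Suc k) D P = (\<forall>\<^sub>F m in sequentially. seq_eventually k (D(k := m)) P)"

definition feat_dot :: "(nat \<Rightarrow> nat) \<Rightarrow> (nat \<Rightarrow> real \<Rightarrow> nat \<Rightarrow> real) \<Rightarrow> nat \<Rightarrow> real \<Rightarrow> real \<Rightarrow> real" where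
  "feat_dot d phi l t t' = (\<Sum>s<d l. phi l t s * phi l t' s)"

end

theory Submission
  imports Defs
begin

(* The kernel is K_D = sum_k eta_k (phi_k(x_k) . phi_k(x'_k)) T_k, where T_k is the trace around
   the ring of the transfer matrices M_i(x) \<otimes> M_i(x') with the factor at site k replaced by the
   identity; here M_i(z) is the D_i x D_(i+1) matrix sum_s A^(i)_s phi_i^s(z_i).  The blocks A^(i) are
   independent centred Gaussians, so E[T_k] and E[T_k T_m] factorise over the sites.  Since
   E[M_i(x) \<otimes> M_i(x')] is sigma_i^2 eta_i (phi_i(x_i) . phi_i(x'_i)) times the matrix with entries
   delta_ac delta_be, contracting the bonds gives E[K_D] = L exactly, for every D.  In E[T_k T_m],
   Wick's theorem leaves three pairings at each site, and contracting the bonds turns the choice of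
   pairings into a cyclic product in which every change of pairing between neighbouring sites costs a
   factor 1/D_j.  Only the constant choice survives, so E[K_D^2] = L^2 + O(1 / min_j D_j), and
   Chebyshev's inequality bounds the probability of an epsilon-deviation uniformly once all D_j are
   large, whatever order they are sent to infinity in. *)

section \<open>Cyclic indices and sums over index functions\<close>
definition mps_prv :: "nat \<Rightarrow> nat \<Rightarrow> nat" where
  "mps_prv n j = (j + n - 1) mod n"

lemma mps_nxt_less: "i < n \<Longrightarrow> mps_nxt n i < n"
  by (simp add: mps_nxt_def)

lemma mps_prv_less: "j < n \<Longrightarrow> mps_prv n j < n"
  by (simp add: mps_prv_def)

lemma mps_prv_nxt: "i < n \<Longrightarrow> mps_prv n (mps_nxt n i) = i"
  by (cases "Suc i = n") (simp_all add: mps_prv_def mps_nxt_def)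

lemma mps_nxt_prv: "j < n \<Longrightarrow> mps_nxt n (mps_prv n j) = j"
  by (cases j) (simp_all add: mps_prv_def mps_nxt_def)

lemma mps_prv_Suc: "Suc j < n \<Longrightarrow> mps_prv n (Suc j) = j"
  by (simp add: mps_prv_def)

lemma bij_betw_mps_nxt: "bij_betw (mps_nxt n) {..<n} {..<n}"
  by (rule bij_betw_byWitness[where f'="mps_prv n"])
     (auto simp: mps_prv_nxt mps_nxt_prv mps_nxt_less mps_prv_less)

lemma prod_reindex_mps_nxt: "(\<Prod>i<n. h (mps_nxt n i)) = (\<Prod>i<n. h i :: 'a::comm_monoid_mult)"
  using prod.reindex_bij_betw[OF bij_betw_mps_nxt, of h] by simp

lemma cyclic_invariant_const:
  assumes "\<And>j. j < n \<Longrightarrow> \<pi> j = \<pi> (mps_prv n j)"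
  shows "j < n \<Longrightarrow> \<pi> j = \<pi> 0"
proof (induction j)
  case (Suc j)
  then show ?case using assms[OF Suc.prems] by (simp add: mps_prv_Suc)
qed simp

lemma sum_PiE_cyclic_separable:
  fixes V :: "nat \<Rightarrow> 'v set" and c :: "nat \<Rightarrow> 'p \<Rightarrow> real" and w :: "'p \<Rightarrow> 'v \<Rightarrow> real"
    and \<Phi> :: "nat \<Rightarrow> 'v \<Rightarrow> 'v \<Rightarrow> real"
  assumes fin: "\<And>i. i < n \<Longrightarrow> finite (V i)" "finite P"
    and \<Phi>: "\<And>i p q. i < n \<Longrightarrow> p \<in> V i \<Longrightarrow> q \<in> V (mps_nxt n i) \<Longrightarrow>
              \<Phi> i p q = (\<Sum>\<pi>\<in>P. c i \<pi> * w \<pi> p * w \<pi> q)"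
  shows "(\<Sum>z\<in>PiE {..<n} V. \<Prod>i<n. \<Phi> i (z i) (z (mps_nxt n i))) =
         (\<Sum>\<pi>\<in>PiE {..<n} (\<lambda>_. P). (\<Prod>i<n. c i (\<pi> i)) *
            (\<Prod>j<n. \<Sum>v\<in>V j. w (\<pi> j) v * w (\<pi> (mps_prv n j)) v))"
proof -
  have shift: "(\<Prod>i<n. w (\<pi> i) (z (mps_nxt n i))) = (\<Prod>j<n. w (\<pi> (mps_prv n j)) (z j))"
    for \<pi> :: "nat \<Rightarrow> 'p" and z
  proof -
    have "(\<Prod>j<n. w (\<pi> (mps_prv n j)) (z j)) =
          (\<Prod>i<n. w (\<pi> (mps_prv n (mps_nxt n i))) (z (mps_nxt n i)))"
      by (rule prod_reindex_mps_nxt[symmetric])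
    also have "\<dots> = (\<Prod>i<n. w (\<pi> i) (z (mps_nxt n i)))"
      by (intro prod.cong refl) (simp add: mps_prv_nxt)
    finally show ?thesis by simp
  qed
  have "(\<Sum>z\<in>PiE {..<n} V. \<Prod>i<n. \<Phi> i (z i) (z (mps_nxt n i))) =
        (\<Sum>z\<in>PiE {..<n} V. \<Sum>\<pi>\<in>PiE {..<n} (\<lambda>_. P).
           \<Prod>i<n. c i (\<pi> i) * w (\<pi> i) (z i) * w (\<pi> i) (z (mps_nxt n i)))"
    using fin by (intro sum.cong refl)
      (auto simp: PiE_iff mps_nxt_less \<Phi> intro!: prod_sum_PiE prod.cong)
  also have "\<dots> = (\<Sum>\<pi>\<in>PiE {..<n} (\<lambda>_. P). (\<Prod>i<n. c i (\<pi> i)) *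
                    (\<Sum>z\<in>PiE {..<n} V. \<Prod>j<n. w (\<pi> j) (z j) * w (\<pi> (mps_prv n j)) (z j)))"
    by (subst sum.swap) (simp add: prod.distrib shift sum_distrib_left mult_ac)
  also have "\<dots> = (\<Sum>\<pi>\<in>PiE {..<n} (\<lambda>_. P). (\<Prod>i<n. c i (\<pi> i)) *
                    (\<Prod>j<n. \<Sum>v\<in>V j. w (\<pi> j) v * w (\<pi> (mps_prv n j)) v))"
    using fin by (intro sum.cong refl arg_cong2[where f="(*)"] prod_sum_PiE[symmetric]) auto
  finally show ?thesis .
qed

lemma sum_PiE_pairs:
  assumes "finite S" "\<And>i. i \<in> S \<Longrightarrow> finite (A i)" "\<And>i. i \<in> S \<Longrightarrow> finite (B i)"
  shows "(\<Sum>a\<in>PiE S A. \<Sum>c\<in>PiE S B. g a c) =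
         (\<Sum>u\<in>PiE S (\<lambda>i. A i \<times> B i). g (\<lambda>i\<in>S. fst (u i)) (\<lambda>i\<in>S. snd (u i)))"
proof -
  have "(\<Sum>a\<in>PiE S A. \<Sum>c\<in>PiE S B. g a c) = (\<Sum>(a, c)\<in>PiE S A \<times> PiE S B. g a c)"
    by (rule sum.cartesian_product)
  also have "\<dots> = (\<Sum>u\<in>PiE S (\<lambda>i. A i \<times> B i). g (\<lambda>i\<in>S. fst (u i)) (\<lambda>i\<in>S. snd (u i)))"
    by (rule sum.reindex_bij_witness[where i="\<lambda>u. (\<lambda>i\<in>S. fst (u i), \<lambda>i\<in>S. snd (u i))"
          and j="\<lambda>(a, c). \<lambda>i\<in>S. (a i, c i)"])
       (auto simp: PiE_iff extensional_def fun_eq_iff intro!: arg_cong2[where f=g])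
  finally show ?thesis .
qed

lemma sum_PiE_fix_coordinate:
  fixes h :: "'i \<Rightarrow> 'b \<Rightarrow> real"
  assumes "finite S" "\<And>i. i \<in> S \<Longrightarrow> finite (B i)" "k \<in> S" "s0 \<in> B k"
  shows "(\<Sum>s\<in>PiE S B. if s k = s0 then (\<Prod>i\<in>S-{k}. h i (s i)) else 0) =
         (\<Prod>i\<in>S-{k}. \<Sum>t\<in>B i. h i t)"
proof -
  define h' where "h' i t = (if i = k then (if t = s0 then 1 else 0) else h i t)" for i t
  have "(\<Sum>s\<in>PiE S B. if s k = s0 then (\<Prod>i\<in>S-{k}. h i (s i)) else 0) =
        (\<Sum>s\<in>PiE S B. \<Prod>i\<in>S. h' i (s i))"
    using assms by (intro sum.cong refl) (auto simp: prod.remove h'_def intro!: prod.cong)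
  also have "\<dots> = (\<Prod>i\<in>S. \<Sum>t\<in>B i. h' i t)"
    using assms by (intro prod_sum_PiE[symmetric]) auto
  also have "\<dots> = (\<Prod>i\<in>S-{k}. \<Sum>t\<in>B i. h i t)"
    using assms by (simp add: prod.remove h'_def)
  finally show ?thesis .
qed

lemma sum_product_fibres:
  fixes f g :: "'a \<Rightarrow> real"
  assumes "finite B" "p ` U \<subseteq> B"
  shows "(\<Sum>b\<in>B. (\<Sum>a\<in>U. if p a = b then f a else 0) * (\<Sum>c\<in>U. if p c = b then g c else 0)) =
         (\<Sum>a\<in>U. \<Sum>c\<in>U. if p a = p c then f a * g c else 0)"
proof -
  have "(\<Sum>b\<in>B. (\<Sum>a\<in>U. if p a = b then f a else 0) * (\<Sum>c\<in>U. if p c = b then g c else 0)) =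
        (\<Sum>b\<in>B. \<Sum>a\<in>U. \<Sum>c\<in>U. if p a = b then (if p c = b then f a * g c else 0) else 0)"
    unfolding sum_product by (intro sum.cong refl) simp
  also have "\<dots> = (\<Sum>a\<in>U. \<Sum>c\<in>U. \<Sum>b\<in>B. if p a = b then (if p c = b then f a * g c else 0) else 0)"
    by (subst sum.swap) (simp add: sum.swap[of _ B])
  also have "\<dots> = (\<Sum>a\<in>U. \<Sum>c\<in>U. if p a = p c then f a * g c else 0)"
  proof (intro sum.cong refl)
    fix a c assume "a \<in> U" "c \<in> U"
    have "(\<Sum>b\<in>B. if p a = b then (if p c = b then f a * g c else 0) else 0) =
          (\<Sum>b\<in>B. if p a = b then (if p a = p c then f a * g c else 0) else 0)"
      by (intro sum.cong) auto
    then show "(\<Sum>b\<in>B. if p a = b then (if p c = b then f a * g c else 0) else 0) =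
               (if p a = p c then f a * g c else 0)"
      using assms \<open>a \<in> U\<close> \<open>c \<in> U\<close> by (auto simp: sum.delta')
  qed
  finally show ?thesis .
qed

lemma sum_if_conj_delta:
  assumes "finite S" "u \<in> S"
  shows "(\<Sum>e\<in>S. if P \<and> u = e then G e else 0) = (if P then G u else (0::real))"
  using assms by (cases P) (simp_all add: sum.delta')

lemma sum4_pairings:
  fixes F :: "'a \<Rightarrow> 'a \<Rightarrow> 'a \<Rightarrow> 'a \<Rightarrow> real"
  assumes S: "finite S"
  shows "(\<Sum>a\<in>S. \<Sum>b\<in>S. \<Sum>c\<in>S. \<Sum>e\<in>S. if a = b \<and> c = e then F a b c e else 0) = (\<Sum>a\<in>S. \<Sum>c\<in>S. F a a c c)"
    and "(\<Sum>a\<in>S. \<Sum>b\<in>S. \<Sum>c\<in>S. \<Sum>e\<in>S. if a = c \<and> b = e then F a b c e else 0) = (\<Sum>a\<in>S. \<Sum>b\<in>S. F a b a b)"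
    and "(\<Sum>a\<in>S. \<Sum>b\<in>S. \<Sum>c\<in>S. \<Sum>e\<in>S. if a = e \<and> b = c then F a b c e else 0) = (\<Sum>a\<in>S. \<Sum>b\<in>S. F a b b a)"
proof -
  show "(\<Sum>a\<in>S. \<Sum>b\<in>S. \<Sum>c\<in>S. \<Sum>e\<in>S. if a = b \<and> c = e then F a b c e else 0) = (\<Sum>a\<in>S. \<Sum>c\<in>S. F a a c c)"
  proof -
    have "(\<Sum>a\<in>S. \<Sum>b\<in>S. \<Sum>c\<in>S. \<Sum>e\<in>S. if a = b \<and> c = e then F a b c e else 0) =
          (\<Sum>a\<in>S. \<Sum>b\<in>S. \<Sum>c\<in>S. if a = b then F a b c c else 0)"
      using S by (simp add: sum_if_conj_delta)
    also have "\<dots> = (\<Sum>a\<in>S. \<Sum>c\<in>S. \<Sum>b\<in>S. if a = b then F a b c c else 0)"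
      by (rule sum.cong[OF refl], rule sum.swap)
    finally show ?thesis
      using S by (simp add: sum.delta)
  qed
  show "(\<Sum>a\<in>S. \<Sum>b\<in>S. \<Sum>c\<in>S. \<Sum>e\<in>S. if a = c \<and> b = e then F a b c e else 0) = (\<Sum>a\<in>S. \<Sum>b\<in>S. F a b a b)"
    using S by (simp add: sum_if_conj_delta sum.delta')
  show "(\<Sum>a\<in>S. \<Sum>b\<in>S. \<Sum>c\<in>S. \<Sum>e\<in>S. if a = e \<and> b = c then F a b c e else 0) = (\<Sum>a\<in>S. \<Sum>b\<in>S. F a b b a)"
    using S by (simp add: sum_if_conj_delta[where P="b = c" for b c, simplified conj_commute] sum.delta')
qed

lemma prod_if_eq_remove:
  "finite A \<Longrightarrow> (\<Prod>i\<in>A. if i = k then 1 else f i) = (\<Prod>i\<in>A - {k}. f i)"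
  by (rule prod.mono_neutral_cong_right) auto

lemma prod_power_of_bool:
  fixes f :: "'i \<Rightarrow> real"
  assumes "finite S" "a \<in> S"
  shows "(\<Prod>i\<in>S. f i ^ of_bool (i = a)) = f a"
proof -
  have "(\<Prod>i\<in>S. f i ^ of_bool (i = a)) = (\<Prod>i\<in>S. if i = a then f i else 1)"
    by (intro prod.cong) auto
  then show ?thesis using assms by (simp add: prod.delta)
qed

lemma seq_eventually_uniform:
  assumes "\<And>D'. \<forall>j<k. N \<le> D' j \<Longrightarrow> P D'"
  shows "seq_eventually k D P"
proof -
  have "seq_eventually k D P" if "\<And>D'. \<forall>j<k. N \<le> D' j \<Longrightarrow> \<forall>j\<ge>k. D' j = D j \<Longrightarrow> P D'" for D
    using that
  proof (induction k arbitrary: D)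
    case 0
    then show ?case using "0.prems"[of D] by simp
  next
    case (Suc k)
    show ?case unfolding seq_eventually.simps
    proof (rule eventually_sequentiallyI[of N])
      fix m assume "N \<le> m"
      show "seq_eventually k (D(k := m)) P"
      proof (rule Suc.IH)
        fix D' assume "\<forall>j<k. N \<le> D' j" "\<forall>j\<ge>k. D' j = (D(k := m)) j"
        then show "P D'"
          using \<open>N \<le> m\<close> by (intro Suc.prems) (auto simp: less_Suc_eq)
      qed
    qed
  qed
  then show ?thesis using assms by blast
qed

section \<open>Products of centred normal distributions\<close>
definition centered_normal :: "real \<Rightarrow> real measure" where
  "centered_normal s = density lborel (normal_density 0 s)"

lemma prob_space_centered_normal: "s > 0 \<Longrightarrow> prob_space (centered_normal s)"
  unfolding centered_normal_def by (rule prob_space_normal_density)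

definition normal_moment :: "nat \<Rightarrow> real \<Rightarrow> real" where
  "normal_moment k s = (if odd k then 0 else fact k / ((2 / s\<^sup>2) ^ (k div 2) * fact (k div 2)))"

lemma normal_moment_values:
  "normal_moment 0 s = 1" "normal_moment (Suc 0) s = 0" "normal_moment (Suc (Suc 0)) s = s\<^sup>2"
  "normal_moment (Suc (Suc (Suc 0))) s = 0" "normal_moment (Suc (Suc (Suc (Suc 0)))) s = 3 * s ^ 4"
  by (simp_all add: normal_moment_def power2_eq_square power4_eq_xxxx field_simps)

lemma centered_normal_power:
  assumes s: "s > 0"
  shows "integrable (centered_normal s) (\<lambda>t. t ^ k)"
    and "integral\<^sup>L (centered_normal s) (\<lambda>t. t ^ k) = normal_moment k s"
proof -
  show "integrable (centered_normal s) (\<lambda>t. t ^ k)"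
    unfolding centered_normal_def using integrable_normal_moment[OF s, of 0 k]
    by (subst integrable_density) auto
  have "integral\<^sup>L (centered_normal s) (\<lambda>t. t ^ k) =
        integral\<^sup>L lborel (\<lambda>t. normal_density 0 s t * (t - 0) ^ k)"
    unfolding centered_normal_def by (subst integral_density) auto
  also have "\<dots> = normal_moment k s"
  proof (cases "even k")
    case True
    then obtain m where "k = 2 * m" by blast
    then show ?thesis using integral_normal_moment_even[OF s, of 0 m] by (simp add: normal_moment_def)
  next
    case False
    then obtain m where "k = 2 * m + 1" using oddE by blast
    then show ?thesis using integral_normal_moment_odd[OF s, of 0 m] by (simp add: normal_moment_def)
  qed
  finally show "integral\<^sup>L (centered_normal s) (\<lambda>t. t ^ k) = normal_moment k s" .
qed

lemma
  fixes e :: "'i \<Rightarrow> nat"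
  assumes sd: "\<And>i. sd i > 0" and S: "finite S"
  shows integrable_PiM_centered_normal_monomial:
      "integrable (PiM S (\<lambda>i. centered_normal (sd i))) (\<lambda>y. \<Prod>i\<in>S. y i ^ e i)"
    and integral_PiM_centered_normal_monomial:
      "integral\<^sup>L (PiM S (\<lambda>i. centered_normal (sd i))) (\<lambda>y. \<Prod>i\<in>S. y i ^ e i) =
       (\<Prod>i\<in>S. normal_moment (e i) (sd i))"
proof -
  interpret product_prob_space "\<lambda>i. centered_normal (sd i)"
    by (intro product_prob_spaceI prob_space_centered_normal sd)
  show "integrable (PiM S (\<lambda>i. centered_normal (sd i))) (\<lambda>y. \<Prod>i\<in>S. y i ^ e i)"
    using product_integrable_prod[OF S, of "\<lambda>i t. t ^ e i"] centered_normal_power[OF sd] by simp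
  show "integral\<^sup>L (PiM S (\<lambda>i. centered_normal (sd i))) (\<lambda>y. \<Prod>i\<in>S. y i ^ e i) =
        (\<Prod>i\<in>S. normal_moment (e i) (sd i))"
    using product_integral_prod[OF S, of "\<lambda>i t. t ^ e i"] centered_normal_power[OF sd] by simp
qed

lemma
  assumes sd: "\<And>i. sd i > 0" and S: "finite S" and mem: "a \<in> S" "b \<in> S"
  shows integrable_PiM_centered_normal_coords2:
      "integrable (PiM S (\<lambda>i. centered_normal (sd i))) (\<lambda>y. y a * y b)"
    and integral_PiM_centered_normal_coords2:
      "integral\<^sup>L (PiM S (\<lambda>i. centered_normal (sd i))) (\<lambda>y. y a * y b) = (if a = b then (sd a)\<^sup>2 else 0)"
proof -
  define e :: "_ \<Rightarrow> nat" where "e i = of_bool (i = a) + of_bool (i = b)" for i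
  have mono: "(\<lambda>y. y a * y b :: real) = (\<lambda>y. \<Prod>i\<in>S. y i ^ e i)"
    using S mem by (simp add: e_def power_add prod.distrib prod_power_of_bool)
  show "integrable (PiM S (\<lambda>i. centered_normal (sd i))) (\<lambda>y. y a * y b)"
    unfolding mono by (rule integrable_PiM_centered_normal_monomial[OF sd S])
  have "(\<Prod>i\<in>S. normal_moment (e i) (sd i)) = (\<Prod>i\<in>{a, b}. normal_moment (e i) (sd i))"
    using S mem by (intro prod.mono_neutral_right) (auto simp: e_def normal_moment_values)
  then show "integral\<^sup>L (PiM S (\<lambda>i. centered_normal (sd i))) (\<lambda>y. y a * y b) =
             (if a = b then (sd a)\<^sup>2 else 0)"
    unfolding mono integral_PiM_centered_normal_monomial[OF sd S]
    by (cases "a = b") (simp_all add: e_def normal_moment_values prod.insert_if)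
qed

lemma
  assumes sd: "\<And>i. sd i > 0" and S: "finite S" and mem: "a \<in> S" "b \<in> S" "c \<in> S" "e \<in> S"
  shows integrable_PiM_centered_normal_coords4:
      "integrable (PiM S (\<lambda>i. centered_normal (sd i))) (\<lambda>y. y a * y b * y c * y e)"
    and integral_PiM_centered_normal_coords4:
      "integral\<^sup>L (PiM S (\<lambda>i. centered_normal (sd i))) (\<lambda>y. y a * y b * y c * y e) =
         (if a = b \<and> c = e then (sd a)\<^sup>2 * (sd c)\<^sup>2 else 0) +
         (if a = c \<and> b = e then (sd a)\<^sup>2 * (sd b)\<^sup>2 else 0) +
         (if a = e \<and> b = c then (sd a)\<^sup>2 * (sd b)\<^sup>2 else 0)"
proof -
  define k :: "_ \<Rightarrow> nat"
    where "k i = of_bool (i = a) + of_bool (i = b) + of_bool (i = c) + of_bool (i = e)" for i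
  have mono: "(\<lambda>y. y a * y b * y c * y e :: real) = (\<lambda>y. \<Prod>i\<in>S. y i ^ k i)"
    using S mem by (simp add: k_def power_add prod.distrib prod_power_of_bool)
  show "integrable (PiM S (\<lambda>i. centered_normal (sd i))) (\<lambda>y. y a * y b * y c * y e)"
    unfolding mono by (rule integrable_PiM_centered_normal_monomial[OF sd S])
  have "(\<Prod>i\<in>S. normal_moment (k i) (sd i)) = (\<Prod>i\<in>{a, b, c, e}. normal_moment (k i) (sd i))"
    using S mem by (intro prod.mono_neutral_right) (auto simp: k_def normal_moment_values)
  then show "integral\<^sup>L (PiM S (\<lambda>i. centered_normal (sd i))) (\<lambda>y. y a * y b * y c * y e) =
         (if a = b \<and> c = e then (sd a)\<^sup>2 * (sd c)\<^sup>2 else 0) +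
         (if a = c \<and> b = e then (sd a)\<^sup>2 * (sd b)\<^sup>2 else 0) +
         (if a = e \<and> b = c then (sd a)\<^sup>2 * (sd b)\<^sup>2 else 0)"
    unfolding mono integral_PiM_centered_normal_monomial[OF sd S]
    by (cases "a = b"; cases "a = c"; cases "a = e"; cases "b = c"; cases "b = e"; cases "c = e")
       (simp_all add: k_def normal_moment_values prod.insert_if power2_eq_square power4_eq_xxxx)
qed

definition gaussian_cov :: "('i \<Rightarrow> real) \<Rightarrow> 'i set \<Rightarrow> ('i \<Rightarrow> real) \<Rightarrow> ('i \<Rightarrow> real) \<Rightarrow> real" where
  "gaussian_cov sd S c c' = (\<Sum>\<iota>\<in>S. c \<iota> * c' \<iota> * (sd \<iota>)\<^sup>2)"

lemma
  assumes sd: "\<And>i. sd i > 0" and S: "finite S"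
  shows integrable_PiM_centered_normal_linear2:
      "integrable (PiM S (\<lambda>i. centered_normal (sd i)))
         (\<lambda>y. (\<Sum>\<iota>\<in>S. c1 \<iota> * y \<iota>) * (\<Sum>\<iota>\<in>S. c2 \<iota> * y \<iota>))"
    and integral_PiM_centered_normal_linear2:
      "integral\<^sup>L (PiM S (\<lambda>i. centered_normal (sd i)))
         (\<lambda>y. (\<Sum>\<iota>\<in>S. c1 \<iota> * y \<iota>) * (\<Sum>\<iota>\<in>S. c2 \<iota> * y \<iota>)) = gaussian_cov sd S c1 c2"
proof -
  let ?M = "PiM S (\<lambda>i. centered_normal (sd i))"
  have expand: "(\<lambda>y. (\<Sum>\<iota>\<in>S. c1 \<iota> * y \<iota>) * (\<Sum>\<iota>\<in>S. c2 \<iota> * y \<iota>)) =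
                (\<lambda>y. \<Sum>a\<in>S. \<Sum>b\<in>S. c1 a * c2 b * (y a * y b))"
    by (simp add: sum_product mult_ac)
  have int: "integrable ?M (\<lambda>y. y a * y b)" if "a \<in> S" "b \<in> S" for a b
    using integrable_PiM_centered_normal_coords2[OF sd S that] .
  show "integrable ?M (\<lambda>y. (\<Sum>\<iota>\<in>S. c1 \<iota> * y \<iota>) * (\<Sum>\<iota>\<in>S. c2 \<iota> * y \<iota>))"
    unfolding expand by (intro Bochner_Integration.integrable_sum integrable_mult_right int)
  have "integral\<^sup>L ?M (\<lambda>y. \<Sum>a\<in>S. \<Sum>b\<in>S. c1 a * c2 b * (y a * y b)) =
        (\<Sum>a\<in>S. \<Sum>b\<in>S. c1 a * c2 b * (if a = b then (sd a)\<^sup>2 else 0))"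
    by (simp add: int Bochner_Integration.integral_sum integral_PiM_centered_normal_coords2[OF sd S])
  also have "\<dots> = gaussian_cov sd S c1 c2"
    using S by (simp add: gaussian_cov_def if_distrib[where f="\<lambda>z. _ * z"] sum.delta cong: if_cong)
  finally show "integral\<^sup>L ?M (\<lambda>y. (\<Sum>\<iota>\<in>S. c1 \<iota> * y \<iota>) * (\<Sum>\<iota>\<in>S. c2 \<iota> * y \<iota>)) =
                gaussian_cov sd S c1 c2"
    unfolding expand .
qed

lemma
  assumes sd: "\<And>i. sd i > 0" and S: "finite S"
  shows integrable_PiM_centered_normal_linear4:
      "integrable (PiM S (\<lambda>i. centered_normal (sd i)))
         (\<lambda>y. (\<Sum>\<iota>\<in>S. c1 \<iota> * y \<iota>) * (\<Sum>\<iota>\<in>S. c2 \<iota> * y \<iota>) * (\<Sum>\<iota>\<in>S. c3 \<iota> * y \<iota>) * (\<Sum>\<iota>\<in>S. c4 \<iota> * y \<iota>))"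
    and integral_PiM_centered_normal_linear4:
      "integral\<^sup>L (PiM S (\<lambda>i. centered_normal (sd i)))
         (\<lambda>y. (\<Sum>\<iota>\<in>S. c1 \<iota> * y \<iota>) * (\<Sum>\<iota>\<in>S. c2 \<iota> * y \<iota>) * (\<Sum>\<iota>\<in>S. c3 \<iota> * y \<iota>) * (\<Sum>\<iota>\<in>S. c4 \<iota> * y \<iota>)) =
       gaussian_cov sd S c1 c2 * gaussian_cov sd S c3 c4 + gaussian_cov sd S c1 c3 * gaussian_cov sd S c2 c4 +
       gaussian_cov sd S c1 c4 * gaussian_cov sd S c2 c3"
proof -
  let ?M = "PiM S (\<lambda>i. centered_normal (sd i))"
  let ?c = "\<lambda>a b c e. c1 a * c2 b * c3 c * c4 e"
  have expand: "(\<lambda>y. (\<Sum>\<iota>\<in>S. c1 \<iota> * y \<iota>) * (\<Sum>\<iota>\<in>S. c2 \<iota> * y \<iota>) * (\<Sum>\<iota>\<in>S. c3 \<iota> * y \<iota>) * (\<Sum>\<iota>\<in>S. c4 \<iota> * y \<iota>)) =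
                (\<lambda>y. \<Sum>a\<in>S. \<Sum>b\<in>S. \<Sum>c\<in>S. \<Sum>e\<in>S. ?c a b c e * (y a * y b * y c * y e))"
    by (simp add: sum_product sum_distrib_left sum_distrib_right mult_ac, subst sum.swap, simp add: mult_ac)
  have int: "integrable ?M (\<lambda>y. y a * y b * y c * y e)" if "a \<in> S" "b \<in> S" "c \<in> S" "e \<in> S" for a b c e
    using integrable_PiM_centered_normal_coords4[OF sd S that] .
  show "integrable ?M (\<lambda>y. (\<Sum>\<iota>\<in>S. c1 \<iota> * y \<iota>) * (\<Sum>\<iota>\<in>S. c2 \<iota> * y \<iota>) * (\<Sum>\<iota>\<in>S. c3 \<iota> * y \<iota>) * (\<Sum>\<iota>\<in>S. c4 \<iota> * y \<iota>))"
    unfolding expand by (intro Bochner_Integration.integrable_sum integrable_mult_right int)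
  have "integral\<^sup>L ?M (\<lambda>y. \<Sum>a\<in>S. \<Sum>b\<in>S. \<Sum>c\<in>S. \<Sum>e\<in>S. ?c a b c e * (y a * y b * y c * y e)) =
        (\<Sum>a\<in>S. \<Sum>b\<in>S. \<Sum>c\<in>S. \<Sum>e\<in>S.
           ?c a b c e * (if a = b \<and> c = e then (sd a)\<^sup>2 * (sd c)\<^sup>2 else 0) +
           ?c a b c e * (if a = c \<and> b = e then (sd a)\<^sup>2 * (sd b)\<^sup>2 else 0) +
           ?c a b c e * (if a = e \<and> b = c then (sd a)\<^sup>2 * (sd b)\<^sup>2 else 0))"
    by (simp add: int Bochner_Integration.integral_sum integral_PiM_centered_normal_coords4[OF sd S]
        distrib_left)
  also have "\<dots> = gaussian_cov sd S c1 c2 * gaussian_cov sd S c3 c4 +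
                  gaussian_cov sd S c1 c3 * gaussian_cov sd S c2 c4 +
                  gaussian_cov sd S c1 c4 * gaussian_cov sd S c2 c3"
    using S by (simp add: if_distrib[where f="(*) _"] sum.distrib sum4_pairings gaussian_cov_def
        sum_product mult_ac cong: if_cong)
  finally show "integral\<^sup>L ?M (\<lambda>y. (\<Sum>\<iota>\<in>S. c1 \<iota> * y \<iota>) * (\<Sum>\<iota>\<in>S. c2 \<iota> * y \<iota>) *
                   (\<Sum>\<iota>\<in>S. c3 \<iota> * y \<iota>) * (\<Sum>\<iota>\<in>S. c4 \<iota> * y \<iota>)) =
       gaussian_cov sd S c1 c2 * gaussian_cov sd S c3 c4 + gaussian_cov sd S c1 c3 * gaussian_cov sd S c2 c4 +
       gaussian_cov sd S c1 c4 * gaussian_cov sd S c2 c3"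
    unfolding expand .
qed

lemma indep_vars_PiM_coordinates:
  assumes M: "\<And>i. i \<in> I \<Longrightarrow> prob_space (M i)" and I: "finite I"
  shows "prob_space.indep_vars (PiM I M) M (\<lambda>i \<omega>. \<omega> i) I"
proof -
  interpret prob_space "PiM I M" using M by (rule prob_space_PiM)
  show ?thesis
  proof (cases "I = {}")
    case True
    show ?thesis unfolding indep_vars_def indep_sets_def using True by simp
  next
    case False
    have "distr (PiM I M) (PiM I M) (\<lambda>\<omega>. \<lambda>i\<in>I. \<omega> i) = distr (PiM I M) (PiM I M) (\<lambda>\<omega>. \<omega>)"
      by (intro distr_cong) (auto simp: space_PiM PiE_def extensional_def fun_eq_iff)
    also have "\<dots> = PiM I (\<lambda>i. distr (PiM I M) (M i) (\<lambda>\<omega>. \<omega> i))"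
      using M by (simp add: distr_PiM_component cong: PiM_cong)
    finally show ?thesis
      using False by (subst indep_vars_iff_distr_eq_PiM') auto
  qed
qed

lemma
  fixes g :: "'j \<Rightarrow> ('i \<Rightarrow> 'a) \<Rightarrow> real"
  assumes M: "\<And>i. prob_space (M i)" and I: "finite I" and L: "finite L"
    and K: "\<And>j. j \<in> L \<Longrightarrow> K j \<subseteq> I" and disj: "disjoint_family_on K L"
    and g_meas: "\<And>j. j \<in> L \<Longrightarrow> g j \<in> borel_measurable (PiM (K j) M)"
    and g_int: "\<And>j. j \<in> L \<Longrightarrow> integrable (PiM (K j) M) (g j)"
  shows integrable_PiM_prod_blocks: "integrable (PiM I M) (\<lambda>\<omega>. \<Prod>j\<in>L. g j (restrict \<omega> (K j)))"
    and integral_PiM_prod_blocks: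
      "integral\<^sup>L (PiM I M) (\<lambda>\<omega>. \<Prod>j\<in>L. g j (restrict \<omega> (K j))) = (\<Prod>j\<in>L. integral\<^sup>L (PiM (K j) M) (g j))"
proof -
  interpret P: prob_space "PiM I M" using M by (rule prob_space_PiM)
  interpret product_prob_space M using M by (rule product_prob_spaceI)
  have restrict_meas: "(\<lambda>\<omega>. restrict \<omega> (K j)) \<in> measurable (PiM I M) (PiM (K j) M)" if "j \<in> L" for j
    using K[OF that] by (rule measurable_restrict_subset)
  have distr: "distr (PiM I M) (PiM (K j) M) (\<lambda>\<omega>. restrict \<omega> (K j)) = PiM (K j) M" if "j \<in> L" for j
    using K[OF that] I by (rule distr_restrict[symmetric])
  have int: "integrable (PiM I M) (\<lambda>\<omega>. g j (restrict \<omega> (K j)))" if "j \<in> L" for j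
    using g_int[OF that] integrable_distr_eq[OF restrict_meas[OF that] g_meas[OF that]]
    unfolding distr[OF that] by simp
  have indep: "P.indep_vars (\<lambda>_. borel) (\<lambda>j \<omega>. g j (restrict \<omega> (K j))) L"
    using P.indep_vars_compose2[OF P.indep_vars_restrict[OF indep_vars_PiM_coordinates[OF M I] K disj] g_meas]
    by simp
  show "integrable (PiM I M) (\<lambda>\<omega>. \<Prod>j\<in>L. g j (restrict \<omega> (K j)))"
    using P.indep_vars_integrable[OF L indep int] .
  have "integral\<^sup>L (PiM I M) (\<lambda>\<omega>. g j (restrict \<omega> (K j))) = integral\<^sup>L (PiM (K j) M) (g j)" if "j \<in> L" for j
    using integral_distr[OF restrict_meas[OF that] g_meas[OF that]] unfolding distr[OF that] by simp
  then show "integral\<^sup>L (PiM I M) (\<lambda>\<omega>. \<Prod>j\<in>L. g j (restrict \<omega> (K j))) = (\<Prod>j\<in>L. integral\<^sup>L (PiM (K j) M) (g j))"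
    using P.indep_vars_lebesgue_integral[OF L indep int] by simp
qed

lemma integral_sum_sum:
  fixes f :: "'a \<Rightarrow> 'b \<Rightarrow> 'c \<Rightarrow> real"
  assumes "\<And>a b. a \<in> A \<Longrightarrow> b \<in> B \<Longrightarrow> integrable M (f a b)"
  shows "integral\<^sup>L M (\<lambda>z. \<Sum>a\<in>A. \<Sum>b\<in>B. f a b z) = (\<Sum>a\<in>A. \<Sum>b\<in>B. integral\<^sup>L M (f a b))"
proof -
  have "integrable M (\<lambda>z. \<Sum>b\<in>B. f a b z)" if "a \<in> A" for a
    using assms[OF that] by (rule Bochner_Integration.integrable_sum)
  then show ?thesis
    using assms by (simp add: Bochner_Integration.integral_sum)
qed

section \<open>The kernel as a trace of transfer matrices\<close>
definition mps_site :: "(nat \<Rightarrow> nat) \<Rightarrow> (nat \<Rightarrow> real \<Rightarrow> nat \<Rightarrow> real) \<Rightarrow> (nat \<Rightarrow> real) \<Rightarrow> nat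
    \<Rightarrow> (nat \<times> nat \<times> nat \<times> nat \<Rightarrow> real) \<Rightarrow> nat \<Rightarrow> nat \<Rightarrow> real" where
  "mps_site d phi x i A a b = (\<Sum>t<d i. A (i, t, a, b) * phi i (x i) t)"

definition mps_env :: "nat \<Rightarrow> (nat \<Rightarrow> nat) \<Rightarrow> (nat \<Rightarrow> real \<Rightarrow> nat \<Rightarrow> real) \<Rightarrow> (nat \<Rightarrow> nat)
    \<Rightarrow> (nat \<times> nat \<times> nat \<times> nat \<Rightarrow> real) \<Rightarrow> (nat \<Rightarrow> real) \<Rightarrow> nat \<Rightarrow> nat \<times> nat \<Rightarrow> real" where
  "mps_env n d phi D A x k ab =
     (\<Sum>a\<in>PiE {..<n} (\<lambda>i. {..<D i}). if (a k, a (mps_nxt n k)) = ab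
        then (\<Prod>i\<in>{..<n}-{k}. mps_site d phi x i A (a i) (a (mps_nxt n i))) else 0)"

definition diag_ind :: "nat \<times> nat \<Rightarrow> real" where
  "diag_ind p = (if fst p = snd p then 1 else 0)"

definition bond_pairs :: "(nat \<Rightarrow> nat) \<Rightarrow> nat \<Rightarrow> (nat \<times> nat) set" where
  "bond_pairs D i = {..<D i} \<times> {..<D i}"

definition site_transfer :: "(nat \<Rightarrow> nat) \<Rightarrow> (nat \<Rightarrow> real \<Rightarrow> nat \<Rightarrow> real) \<Rightarrow> (nat \<Rightarrow> real) \<Rightarrow> (nat \<Rightarrow> real)
    \<Rightarrow> nat \<Rightarrow> nat \<Rightarrow> (nat \<times> nat \<times> nat \<times> nat \<Rightarrow> real) \<Rightarrow> nat \<times> nat \<Rightarrow> nat \<times> nat \<Rightarrow> real" where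
  "site_transfer d phi x x' k i A p q =
     (if i = k then diag_ind p * diag_ind q
      else mps_site d phi x i A (fst p) (fst q) * mps_site d phi x' i A (snd p) (snd q))"

text \<open>The trace of \<open>\<Prod>\<^sub>i M\<^sub>i(x) \<otimes> M\<^sub>i(x')\<close> around the ring, with the factor at site \<open>k\<close>
  replaced by the identity.\<close>
definition ntk_trace :: "nat \<Rightarrow> (nat \<Rightarrow> nat) \<Rightarrow> (nat \<Rightarrow> real \<Rightarrow> nat \<Rightarrow> real) \<Rightarrow> (nat \<Rightarrow> nat)
    \<Rightarrow> (nat \<Rightarrow> real) \<Rightarrow> (nat \<Rightarrow> real) \<Rightarrow> nat \<Rightarrow> (nat \<times> nat \<times> nat \<times> nat \<Rightarrow> real) \<Rightarrow> real" where
  "ntk_trace n d phi D x x' k A =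
     (\<Sum>u\<in>PiE {..<n} (bond_pairs D). \<Prod>i<n. site_transfer d phi x x' k i A (u i) (u (mps_nxt n i)))"

lemma mps_fun_upd_affine:
  fixes A :: "nat \<times> nat \<times> nat \<times> nat \<Rightarrow> real" and phi :: "nat \<Rightarrow> real \<Rightarrow> nat \<Rightarrow> real"
    and x :: "nat \<Rightarrow> real"
  assumes k: "k < n"
  defines "Q \<equiv> \<lambda>s a. \<Prod>i\<in>{..<n}-{k}. A (i, s i, a i, a (mps_nxt n i)) * phi i (x i) (s i)"
  shows "mps n d phi D (A((k, s0, \<alpha>, \<beta>) := t)) x = mps n d phi D (A((k, s0, \<alpha>, \<beta>) := 0)) x +
           t * (\<Sum>s\<in>PiE {..<n} (\<lambda>i. {..<d i}). \<Sum>a\<in>PiE {..<n} (\<lambda>i. {..<D i}).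
                  if s k = s0 \<and> a k = \<alpha> \<and> a (mps_nxt n k) = \<beta> then phi k (x k) s0 * Q s a else 0)"
proof -
  have "(\<Prod>i<n. (A((k, s0, \<alpha>, \<beta>) := u)) (i, s i, a i, a (mps_nxt n i)) * phi i (x i) (s i)) =
        (if s k = s0 \<and> a k = \<alpha> \<and> a (mps_nxt n k) = \<beta> then u else A (k, s k, a k, a (mps_nxt n k))) *
        phi k (x k) (s k) * Q s a" for u s a
  proof -
    have "(\<Prod>i<n. (A((k, s0, \<alpha>, \<beta>) := u)) (i, s i, a i, a (mps_nxt n i)) * phi i (x i) (s i)) =
          (A((k, s0, \<alpha>, \<beta>) := u)) (k, s k, a k, a (mps_nxt n k)) * phi k (x k) (s k) *
          (\<Prod>i\<in>{..<n}-{k}. (A((k, s0, \<alpha>, \<beta>) := u)) (i, s i, a i, a (mps_nxt n i)) * phi i (x i) (s i))"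
      using k by (simp add: prod.remove)
    also have "(\<Prod>i\<in>{..<n}-{k}. (A((k, s0, \<alpha>, \<beta>) := u)) (i, s i, a i, a (mps_nxt n i)) *
                 phi i (x i) (s i)) = Q s a"
      unfolding Q_def by (intro prod.cong) auto
    finally show ?thesis by simp
  qed
  then have "(\<Prod>i<n. (A((k, s0, \<alpha>, \<beta>) := t)) (i, s i, a i, a (mps_nxt n i)) * phi i (x i) (s i)) =
        (\<Prod>i<n. (A((k, s0, \<alpha>, \<beta>) := 0)) (i, s i, a i, a (mps_nxt n i)) * phi i (x i) (s i)) +
        t * (if s k = s0 \<and> a k = \<alpha> \<and> a (mps_nxt n k) = \<beta> then phi k (x k) s0 * Q s a else 0)" for s a
    by (simp split: if_split)
  then show ?thesis
    unfolding mps_def by (simp add: sum.distrib sum_distrib_left)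
qed

lemma mps_pd_eq:
  assumes k: "k < n" and "s0 < d k"
  shows "mps_pd n d phi D A (k, s0, \<alpha>, \<beta>) x = phi k (x k) s0 * mps_env n d phi D A x k (\<alpha>, \<beta>)"
proof -
  define G where "G a = (\<Prod>i\<in>{..<n}-{k}. mps_site d phi x i A (a i) (a (mps_nxt n i)))" for a
  let ?Q = "\<lambda>s a. \<Prod>i\<in>{..<n}-{k}. A (i, s i, a i, a (mps_nxt n i)) * phi i (x i) (s i)"
  have fix_s: "(\<Sum>s\<in>PiE {..<n} (\<lambda>i. {..<d i}). if s k = s0 then ?Q s a else 0) = G a" for a
    unfolding G_def mps_site_def using assms
    by (subst sum_PiE_fix_coordinate[where h="\<lambda>i t. A (i, t, a i, a (mps_nxt n i)) * phi i (x i) t"]) auto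
  have "mps_pd n d phi D A (k, s0, \<alpha>, \<beta>) x =
        (\<Sum>s\<in>PiE {..<n} (\<lambda>i. {..<d i}). \<Sum>a\<in>PiE {..<n} (\<lambda>i. {..<D i}).
           if s k = s0 \<and> a k = \<alpha> \<and> a (mps_nxt n k) = \<beta> then phi k (x k) s0 * ?Q s a else 0)"
    unfolding mps_pd_def
    by (subst mps_fun_upd_affine[OF k]) (rule DERIV_imp_deriv, auto intro!: derivative_eq_intros)
  also have "\<dots> = (\<Sum>a\<in>PiE {..<n} (\<lambda>i. {..<D i}). \<Sum>s\<in>PiE {..<n} (\<lambda>i. {..<d i}).
                    if (a k, a (mps_nxt n k)) = (\<alpha>, \<beta>) then phi k (x k) s0 * (if s k = s0 then ?Q s a else 0)
                    else 0)"
    by (subst sum.swap) (intro sum.cong refl, simp)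
  also have "\<dots> = (\<Sum>a\<in>PiE {..<n} (\<lambda>i. {..<D i}).
                    if (a k, a (mps_nxt n k)) = (\<alpha>, \<beta>) then phi k (x k) s0 * G a else 0)"
  proof (intro sum.cong refl)
    fix a
    show "(\<Sum>s\<in>PiE {..<n} (\<lambda>i. {..<d i}). if (a k, a (mps_nxt n k)) = (\<alpha>, \<beta>)
            then phi k (x k) s0 * (if s k = s0 then ?Q s a else 0) else 0) =
          (if (a k, a (mps_nxt n k)) = (\<alpha>, \<beta>) then phi k (x k) s0 * G a else 0)"
      by (cases "(a k, a (mps_nxt n k)) = (\<alpha>, \<beta>)")
         (simp_all only: if_True if_False refl sum.neutral_const fix_s flip: sum_distrib_left)
  qed
  also have "\<dots> = phi k (x k) s0 * mps_env n d phi D A x k (\<alpha>, \<beta>)"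
    unfolding mps_env_def G_def sum_distrib_left by (intro sum.cong refl) simp
  finally show ?thesis .
qed

lemma env_inner_eq_ntk_trace:
  assumes k: "k < n"
  shows "(\<Sum>\<alpha><D k. \<Sum>\<beta><D (mps_nxt n k). mps_env n d phi D A x k (\<alpha>, \<beta>) * mps_env n d phi D A x' k (\<alpha>, \<beta>)) =
         ntk_trace n d phi D x x' k A"
proof -
  define AA where "AA = PiE {..<n} (\<lambda>i. {..<D i})"
  define G where "G y a = (\<Prod>i\<in>{..<n}-{k}. mps_site d phi y i A (a i) (a (mps_nxt n i)))" for y a
  define fsts snds where "fsts u = (\<lambda>i\<in>{..<n}. fst (u i))" and "snds u = (\<lambda>i\<in>{..<n}. snd (u i))"
    for u :: "nat \<Rightarrow> nat \<times> nat"
  have fibre: "(\<lambda>a. (a k, a (mps_nxt n k))) ` AA \<subseteq> {..<D k} \<times> {..<D (mps_nxt n k)}"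
    using k mps_nxt_less[OF k] by (auto simp: AA_def PiE_iff)
  have "(\<Sum>\<alpha><D k. \<Sum>\<beta><D (mps_nxt n k). mps_env n d phi D A x k (\<alpha>, \<beta>) * mps_env n d phi D A x' k (\<alpha>, \<beta>)) =
        (\<Sum>b\<in>{..<D k} \<times> {..<D (mps_nxt n k)}. mps_env n d phi D A x k b * mps_env n d phi D A x' k b)"
    by (simp add: sum.cartesian_product')
  also have "\<dots> = (\<Sum>a\<in>AA. \<Sum>c\<in>AA. if (a k, a (mps_nxt n k)) = (c k, c (mps_nxt n k)) then G x a * G x' c else 0)"
    unfolding mps_env_def AA_def[symmetric] G_def[symmetric] by (simp add: sum_product_fibres[OF _ fibre])
  also have "\<dots> = (\<Sum>u\<in>PiE {..<n} (bond_pairs D).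
       if (fsts u k, fsts u (mps_nxt n k)) = (snds u k, snds u (mps_nxt n k))
       then G x (fsts u) * G x' (snds u) else 0)"
    unfolding AA_def bond_pairs_def fsts_def snds_def by (rule sum_PiE_pairs) auto
  also have "\<dots> = ntk_trace n d phi D x x' k A"
    unfolding ntk_trace_def
  proof (intro sum.cong refl)
    fix u
    have "(\<Prod>i<n. site_transfer d phi x x' k i A (u i) (u (mps_nxt n i))) =
          diag_ind (u k) * diag_ind (u (mps_nxt n k)) *
          (\<Prod>i\<in>{..<n}-{k}. site_transfer d phi x x' k i A (u i) (u (mps_nxt n i)))"
      using k by (simp add: prod.remove site_transfer_def)
    also have "(\<Prod>i\<in>{..<n}-{k}. site_transfer d phi x x' k i A (u i) (u (mps_nxt n i))) =
               G x (fsts u) * G x' (snds u)"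
      unfolding G_def fsts_def snds_def prod.distrib[symmetric]
      by (intro prod.cong refl) (auto simp: site_transfer_def mps_nxt_less)
    finally show "(if (fsts u k, fsts u (mps_nxt n k)) = (snds u k, snds u (mps_nxt n k))
                   then G x (fsts u) * G x' (snds u) else 0) =
                  (\<Prod>i<n. site_transfer d phi x x' k i A (u i) (u (mps_nxt n i)))"
      using k mps_nxt_less[OF k] by (simp add: diag_ind_def fsts_def snds_def)
  qed
  finally show ?thesis .
qed

lemma mps_ntk_eq_trace:
  "mps_ntk n d phi D A x x' =
     (\<Sum>k<n. 1 / sqrt (real (D k * D (mps_nxt n k))) *
        (feat_dot d phi k (x k) (x' k) * ntk_trace n d phi D x x' k A))"
  unfolding mps_ntk_def
proof (intro sum.cong refl arg_cong2[where f="(*)"])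
  fix k assume "k \<in> {..<n}"
  then have k: "k < n" by simp
  have "(\<Sum>s<d k. \<Sum>a<D k. \<Sum>b<D (mps_nxt n k).
           mps_pd n d phi D A (k, s, a, b) x * mps_pd n d phi D A (k, s, a, b) x') =
        (\<Sum>s<d k. phi k (x k) s * phi k (x' k) s *
           (\<Sum>a<D k. \<Sum>b<D (mps_nxt n k). mps_env n d phi D A x k (a, b) * mps_env n d phi D A x' k (a, b)))"
    using k by (simp add: mps_pd_eq sum_distrib_left mult_ac)
  then show "(\<Sum>s<d k. \<Sum>a<D k. \<Sum>b<D (mps_nxt n k).
           mps_pd n d phi D A (k, s, a, b) x * mps_pd n d phi D A (k, s, a, b) x') =
        feat_dot d phi k (x k) (x' k) * ntk_trace n d phi D x x' k A"
    by (simp add: env_inner_eq_ntk_trace[OF k] feat_dot_def sum_distrib_right)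
qed

lemma feat_dot_commute: "feat_dot d phi i t t' = feat_dot d phi i t' t"
  by (simp add: feat_dot_def mult.commute)

section \<open>Pairings\<close>

text \<open>At a bond, the four legs \<open>x, x', x, x'\<close> of \<open>T\<^sub>k T\<^sub>m\<close> carry the indices
  \<open>((a, c), (a', c'))\<close>.  Pairing \<open>0\<close> contracts each \<open>x\<close> leg with the \<open>x'\<close> leg of the same
  factor, pairing \<open>1\<close> the two \<open>x\<close> legs and the two \<open>x'\<close> legs, pairing \<open>2\<close> crosses the factors.\<close>
definition pairing :: "nat \<Rightarrow> (nat \<times> nat) \<times> (nat \<times> nat) \<Rightarrow> real" where
  "pairing \<pi> P = (case P of ((a, c), (a', c')) \<Rightarrow>
     if \<pi> = 0 then of_bool (a = c \<and> a' = c')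
     else if \<pi> = 1 then of_bool (a = a' \<and> c = c')
     else of_bool (a = c' \<and> c = a'))"

lemma sum_bond_pairs_diag_ind: "(\<Sum>p\<in>bond_pairs D j. diag_ind p * diag_ind p) = real (D j)"
proof -
  have "(\<Sum>p\<in>bond_pairs D j. diag_ind p * diag_ind p) = (\<Sum>a<D j. \<Sum>c<D j. if a = c then 1 else 0)"
    unfolding bond_pairs_def sum.cartesian_product' by (intro sum.cong refl) (simp add: diag_ind_def)
  then show ?thesis by simp
qed

lemma sum_pairing_product:
  assumes "\<pi> \<in> {0, 1, 2}" "\<rho> \<in> {0, 1, 2}"
  shows "(\<Sum>P\<in>bond_pairs D j \<times> bond_pairs D j. pairing \<pi> P * pairing \<rho> P) =
         (if \<pi> = \<rho> then real (D j) ^ 2 else real (D j))"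
proof -
  have prod: "pairing \<pi> ((a, c), (a', c')) * pairing \<rho> ((a, c), (a', c')) =
    (if \<pi> = \<rho> then (if \<pi> = 0 then (if c' = a' then (if c = a then 1 else 0) else 0)
       else if \<pi> = 1 then (if c' = c then (if a' = a then 1 else 0) else 0)
       else (if c' = a then (if a' = c then 1 else 0) else 0))
     else (if c' = a' then (if a' = a then (if c = a then 1 else 0) else 0) else 0))" for a c a' c'
    using assms by (auto simp: pairing_def)
  show ?thesis
    unfolding bond_pairs_def sum.cartesian_product' prod
    using assms by (cases "\<pi> = \<rho>")
      (auto simp: sum.delta power2_eq_square if_distrib[where f="\<lambda>z. _ * z"] cong: if_cong)
qed

text \<open>The weight of pairing \<open>\<pi>\<close> at site \<open>i\<close>: \<open>v\<close> is the parameter variance and \<open>a\<close>, \<open>b\<close>,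
  \<open>g\<close> are the Gram entries \<open>|\<phi>\<^sub>i(x\<^sub>i)|\<^sup>2\<close>, \<open>|\<phi>\<^sub>i(x'\<^sub>i)|\<^sup>2\<close>, \<open>\<phi>\<^sub>i(x\<^sub>i) \<cdot> \<phi>\<^sub>i(x'\<^sub>i)\<close>.\<close>
definition pairing_weight ::
    "(nat \<Rightarrow> real) \<Rightarrow> (nat \<Rightarrow> real) \<Rightarrow> (nat \<Rightarrow> real) \<Rightarrow> (nat \<Rightarrow> real) \<Rightarrow> nat \<Rightarrow> nat \<Rightarrow> nat \<Rightarrow> nat \<Rightarrow> real" where
  "pairing_weight v a b g k m i \<pi> =
     (if \<pi> = 0 then (if i = k then 1 else v i * g i) * (if i = m then 1 else v i * g i)
      else if \<pi> = 1 then (if i \<noteq> k \<and> i \<noteq> m then (v i)\<^sup>2 * (a i * b i) else 0)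
      else (if i \<noteq> k \<and> i \<noteq> m then (v i)\<^sup>2 * (g i)\<^sup>2 else 0))"

lemma pairing_weight_scale:
  "(if i = k then c i else 1) * (if i = m then c i else 1) * pairing_weight (\<lambda>i. s i * c i) a b g k m i \<pi> =
   (c i)\<^sup>2 * pairing_weight s a b g k m i \<pi>"
  by (auto simp: pairing_weight_def power2_eq_square algebra_simps)

lemma pairing_weight_eq_0:
  "\<pi> \<noteq> 0 \<Longrightarrow> pairing_weight v a b g k m k \<pi> = 0"
  by (simp add: pairing_weight_def)

definition ntk_var_bound ::
    "nat \<Rightarrow> (nat \<Rightarrow> nat) \<Rightarrow> (nat \<Rightarrow> real \<Rightarrow> nat \<Rightarrow> real) \<Rightarrow> (nat \<Rightarrow> real) \<Rightarrow> (nat \<Rightarrow> real) \<Rightarrow> (nat \<Rightarrow> real) \<Rightarrow> real" where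
  "ntk_var_bound n d phi \<sigma> x x' =
     (\<Sum>k<n. \<Sum>m<n. \<Sum>\<pi>\<in>PiE {..<n} (\<lambda>_. {0::nat, 1, 2}) - {\<lambda>i\<in>{..<n}. 0}.
        \<bar>feat_dot d phi k (x k) (x' k) * feat_dot d phi m (x m) (x' m) *
         (\<Prod>i<n. pairing_weight (\<lambda>i. (\<sigma> i)\<^sup>2) (\<lambda>i. feat_dot d phi i (x i) (x i))
            (\<lambda>i. feat_dot d phi i (x' i) (x' i)) (\<lambda>i. feat_dot d phi i (x i) (x' i)) k m i (\<pi> i))\<bar>)"

section \<open>Moments of the kernel at initialization\<close>

locale mps_ntk_setting =
  fixes n :: nat and d :: "nat \<Rightarrow> nat" and phi :: "nat \<Rightarrow> real \<Rightarrow> nat \<Rightarrow> real"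
    and \<sigma> :: "nat \<Rightarrow> real" and x x' :: "nat \<Rightarrow> real" and D :: "nat \<Rightarrow> nat"
  assumes n_pos: "n \<ge> 1" and \<sigma>_pos: "\<And>i. i < n \<Longrightarrow> \<sigma> i > 0" and D_pos: "\<And>i. i < n \<Longrightarrow> D i \<ge> 1"
begin

definition "idx = mps_idx n d D"
definition "block j = {\<iota> \<in> idx. fst \<iota> = j}"
definition "\<eta> i = 1 / sqrt (real (D i * D (mps_nxt n i)))"
definition "var i = (\<sigma> i)\<^sup>2 * \<eta> i"

text \<open>Off \<open>idx\<close> the standard deviation \<open>1\<close> is arbitrary; it makes every factor of the product
  measure a probability space.\<close>
definition "sd \<iota> = (if \<iota> \<in> idx then sqrt (var (fst \<iota>)) else 1)"

definition "\<alpha> i = feat_dot d phi i (x i) (x i)"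
definition "\<beta> i = feat_dot d phi i (x' i) (x' i)"
definition "\<gamma> i = feat_dot d phi i (x i) (x' i)"

abbreviation "\<mu> \<equiv> PiM idx (\<lambda>\<iota>. centered_normal (sd \<iota>))"
abbreviation "site_measure j \<equiv> PiM (block j) (\<lambda>\<iota>. centered_normal (sd \<iota>))"

lemma block_iff:
  "(i, t, a, b) \<in> block j \<longleftrightarrow> i = j \<and> i < n \<and> t < d i \<and> a < D i \<and> b < D (mps_nxt n i)"
  by (auto simp: block_def idx_def mps_idx_def)

lemma finite_idx: "finite idx"
proof -
  have "idx = (SIGMA i:{..<n}. {..<d i} \<times> {..<D i} \<times> {..<D (mps_nxt n i)})"
    by (auto simp: idx_def mps_idx_def)
  then show ?thesis by simp
qed

lemma finite_block: "finite (block j)"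
  using finite_idx by (simp add: block_def)

lemma block_subset: "block j \<subseteq> idx"
  by (auto simp: block_def)

lemma disjoint_family_block: "disjoint_family_on block L"
  by (auto simp: disjoint_family_on_def block_def)

lemma \<eta>_pos: "i < n \<Longrightarrow> \<eta> i > 0"
  using D_pos[of i] D_pos[OF mps_nxt_less[of i n]] by (simp add: \<eta>_def)

lemma var_pos: "i < n \<Longrightarrow> var i > 0"
  using \<eta>_pos[of i] \<sigma>_pos[of i] by (simp add: var_def)

lemma sd_pos: "sd \<iota> > 0"
  using var_pos by (auto simp: sd_def idx_def mps_idx_def)

lemma sd_sq: "\<iota> \<in> block i \<Longrightarrow> (sd \<iota>)\<^sup>2 = var i"
  using var_pos by (auto simp: sd_def block_def idx_def mps_idx_def less_imp_le)

lemma mps_init_eq: "mps_init n d \<sigma> D = \<mu>"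
  unfolding mps_init_def idx_def[symmetric]
  by (intro PiM_cong refl) (auto simp: centered_normal_def sd_def var_def \<eta>_def split: prod.split)

lemma prob_space_site_measure: "prob_space (site_measure j)"
  by (rule prob_space_PiM) (simp add: prob_space_centered_normal sd_pos)

lemma measure_site_measure_space [simp]: "measure (site_measure j) (space (site_measure j)) = 1"
  using prob_space_site_measure[of j] by (simp add: prob_space.prob_space)

lemma integrable_site_measure_const: "integrable (site_measure j) (\<lambda>_. c)"
proof -
  interpret prob_space "site_measure j" by (rule prob_space_site_measure)
  show ?thesis by simp
qed

lemma prob_space_\<mu>: "prob_space \<mu>"
  by (rule prob_space_PiM) (simp add: prob_space_centered_normal sd_pos)

lemma sum_block_bond:
  assumes "i < n" "a < D i" "b < D (mps_nxt n i)"
  shows "(\<Sum>\<iota>\<in>block i. if snd (snd \<iota>) = (a, b) then h \<iota> else 0) = (\<Sum>t<d i. h (i, t, a, b))"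
proof -
  have "(\<Sum>\<iota>\<in>block i. if snd (snd \<iota>) = (a, b) then h \<iota> else 0) =
        (\<Sum>\<iota>\<in>{\<iota> \<in> block i. snd (snd \<iota>) = (a, b)}. h \<iota>)"
    using finite_block by (simp add: sum.inter_filter)
  also have "{\<iota> \<in> block i. snd (snd \<iota>) = (a, b)} = (\<lambda>t. (i, t, a, b)) ` {..<d i}"
    using assms by (auto simp: block_def idx_def mps_idx_def)
  also have "(\<Sum>\<iota>\<in>(\<lambda>t. (i, t, a, b)) ` {..<d i}. h \<iota>) = (\<Sum>t<d i. h (i, t, a, b))"
    by (rule sum.reindex_cong[OF _ refl refl]) (auto simp: inj_on_def)
  finally show ?thesis .
qed

definition "site_coef z a b \<iota> = (if snd (snd \<iota>) = (a, b) then phi (fst \<iota>) (z (fst \<iota>)) (fst (snd \<iota>)) else 0)"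

definition "bond_cov i z p z' q = (if p = q then var i * feat_dot d phi i (z i) (z' i) else 0)"

lemma mps_site_linear:
  assumes "i < n" "a < D i" "b < D (mps_nxt n i)"
  shows "mps_site d phi z i y a b = (\<Sum>\<iota>\<in>block i. site_coef z a b \<iota> * y \<iota>)"
proof -
  have "site_coef z a b \<iota> * y \<iota> =
        (if snd (snd \<iota>) = (a, b) then phi (fst \<iota>) (z (fst \<iota>)) (fst (snd \<iota>)) * y \<iota> else 0)"
    for \<iota> by (simp add: site_coef_def)
  then show ?thesis
    using assms by (simp add: sum_block_bond mps_site_def mult.commute)
qed

lemma gaussian_cov_site_coef:
  assumes i: "i < n" and "a < D i" "b < D (mps_nxt n i)" "c < D i" "e < D (mps_nxt n i)"
  shows "gaussian_cov sd (block i) (site_coef z a b) (site_coef z' c e) = bond_cov i z (a, b) z' (c, e)"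
proof (cases "(a, b) = (c, e)")
  case True
  have "gaussian_cov sd (block i) (site_coef z a b) (site_coef z' c e) =
        (\<Sum>\<iota>\<in>block i. if snd (snd \<iota>) = (a, b) then
           phi (fst \<iota>) (z (fst \<iota>)) (fst (snd \<iota>)) * phi (fst \<iota>) (z' (fst \<iota>)) (fst (snd \<iota>)) * var i else 0)"
    unfolding gaussian_cov_def using True by (intro sum.cong refl) (simp add: site_coef_def sd_sq)
  also have "\<dots> = bond_cov i z (a, b) z' (c, e)"
    using True assms by (simp add: sum_block_bond bond_cov_def feat_dot_def sum_distrib_left mult_ac)
  finally show ?thesis .
next
  case False
  then show ?thesis
    by (auto simp: gaussian_cov_def site_coef_def bond_cov_def intro!: sum.neutral)
qed

lemma mps_site_restrict:
  assumes "i < n" "a < D i" "b < D (mps_nxt n i)"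
  shows "mps_site d phi z i (restrict A (block i)) a b = mps_site d phi z i A a b"
  unfolding mps_site_def using assms by (intro sum.cong refl) (simp add: block_iff)

lemma
  assumes "i < n" "a < D i" "b < D (mps_nxt n i)" "c < D i" "e < D (mps_nxt n i)"
  shows integrable_site_moment2:
      "integrable (site_measure i) (\<lambda>y. mps_site d phi z i y a b * mps_site d phi z' i y c e)"
    and integral_site_moment2:
      "integral\<^sup>L (site_measure i) (\<lambda>y. mps_site d phi z i y a b * mps_site d phi z' i y c e) =
       bond_cov i z (a, b) z' (c, e)"
  using integrable_PiM_centered_normal_linear2[OF sd_pos finite_block]
    integral_PiM_centered_normal_linear2[OF sd_pos finite_block] gaussian_cov_site_coef[OF assms]
  by (simp_all add: mps_site_linear assms)

lemma
  assumes "i < n" "a1 < D i" "b1 < D (mps_nxt n i)" "a2 < D i" "b2 < D (mps_nxt n i)"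
    "a3 < D i" "b3 < D (mps_nxt n i)" "a4 < D i" "b4 < D (mps_nxt n i)"
  shows integrable_site_moment4:
      "integrable (site_measure i) (\<lambda>y. mps_site d phi z1 i y a1 b1 * mps_site d phi z2 i y a2 b2 *
         mps_site d phi z3 i y a3 b3 * mps_site d phi z4 i y a4 b4)"
    and integral_site_moment4:
      "integral\<^sup>L (site_measure i) (\<lambda>y. mps_site d phi z1 i y a1 b1 * mps_site d phi z2 i y a2 b2 *
         mps_site d phi z3 i y a3 b3 * mps_site d phi z4 i y a4 b4) =
       bond_cov i z1 (a1, b1) z2 (a2, b2) * bond_cov i z3 (a3, b3) z4 (a4, b4) +
       bond_cov i z1 (a1, b1) z3 (a3, b3) * bond_cov i z2 (a2, b2) z4 (a4, b4) +
       bond_cov i z1 (a1, b1) z4 (a4, b4) * bond_cov i z2 (a2, b2) z3 (a3, b3)"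
  using integrable_PiM_centered_normal_linear4[OF sd_pos finite_block]
    integral_PiM_centered_normal_linear4[OF sd_pos finite_block] assms
  by (simp_all add: mps_site_linear gaussian_cov_site_coef)

lemma
  assumes i: "i < n" and p: "p \<in> bond_pairs D i" and q: "q \<in> bond_pairs D (mps_nxt n i)"
  shows integrable_site_transfer: "integrable (site_measure i) (\<lambda>y. site_transfer d phi x x' k i y p q)"
    and integral_site_transfer: "integral\<^sup>L (site_measure i) (\<lambda>y. site_transfer d phi x x' k i y p q) =
      (if i = k then 1 else var i * \<gamma> i) * diag_ind p * diag_ind q"
proof -
  obtain a c b e where pq: "p = (a, c)" "q = (b, e)" by (cases p, cases q)
  have bnd: "a < D i" "c < D i" "b < D (mps_nxt n i)" "e < D (mps_nxt n i)"
    using p q by (auto simp: pq bond_pairs_def)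
  show "integrable (site_measure i) (\<lambda>y. site_transfer d phi x x' k i y p q)"
    using integrable_site_moment2[OF i bnd(1,3,2,4)]
    by (cases "i = k") (simp_all add: site_transfer_def pq integrable_site_measure_const)
  show "integral\<^sup>L (site_measure i) (\<lambda>y. site_transfer d phi x x' k i y p q) =
      (if i = k then 1 else var i * \<gamma> i) * diag_ind p * diag_ind q"
    using integral_site_moment2[OF i bnd(1,3,2,4), of x x']
    by (auto simp: site_transfer_def pq bond_cov_def diag_ind_def \<gamma>_def measure_site_measure_space)
qed

definition "site_transfer_pair k m i A P Q =
  site_transfer d phi x x' k i A (fst P) (fst Q) * site_transfer d phi x x' m i A (snd P) (snd Q)"

abbreviation "pair_coef \<equiv> pairing_weight var \<alpha> \<beta> \<gamma>"

lemma pairings_off_site: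
  assumes ik: "i \<noteq> k" and im: "i \<noteq> m"
  shows "(\<Sum>\<pi>\<in>{0, 1, 2}. pair_coef k m i \<pi> * pairing \<pi> ((a, c), (a', c')) * pairing \<pi> ((b, e), (b', e'))) =
         bond_cov i x (a, b) x' (c, e) * bond_cov i x (a', b') x' (c', e') +
         bond_cov i x (a, b) x (a', b') * bond_cov i x' (c, e) x' (c', e') +
         bond_cov i x (a, b) x' (c', e') * bond_cov i x' (c, e) x (a', b')"
proof -
  let ?P = "((a, c), (a', c'))" and ?Q = "((b, e), (b', e'))"
  have "pair_coef k m i 0 * pairing 0 ?P * pairing 0 ?Q =
        bond_cov i x (a, b) x' (c, e) * bond_cov i x (a', b') x' (c', e')"
    using ik im by (simp add: pairing_weight_def pairing_def bond_cov_def \<gamma>_def power2_eq_square)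
  moreover have "pair_coef k m i 1 * pairing 1 ?P * pairing 1 ?Q =
                 bond_cov i x (a, b) x (a', b') * bond_cov i x' (c, e) x' (c', e')"
    using ik im by (simp add: pairing_weight_def pairing_def bond_cov_def \<alpha>_def \<beta>_def power2_eq_square)
  moreover have "pair_coef k m i 2 * pairing 2 ?P * pairing 2 ?Q =
                 bond_cov i x (a, b) x' (c', e') * bond_cov i x' (c, e) x (a', b')"
    using ik im by (auto simp: pairing_weight_def pairing_def bond_cov_def \<gamma>_def power2_eq_square
        feat_dot_commute[of d phi i "x' i"])
  ultimately show ?thesis
    by (simp add: add.assoc)
qed

lemma
  assumes i: "i < n" and P: "P \<in> bond_pairs D i \<times> bond_pairs D i"
    and Q: "Q \<in> bond_pairs D (mps_nxt n i) \<times> bond_pairs D (mps_nxt n i)"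
  shows integrable_site_transfer_pair: "integrable (site_measure i) (\<lambda>y. site_transfer_pair k m i y P Q)"
    and integral_site_transfer_pair: "integral\<^sup>L (site_measure i) (\<lambda>y. site_transfer_pair k m i y P Q) =
      (\<Sum>\<pi>\<in>{0, 1, 2}. pair_coef k m i \<pi> * pairing \<pi> P * pairing \<pi> Q)"
proof -
  obtain a c a' c' b e b' e' where PQ: "P = ((a, c), (a', c'))" "Q = ((b, e), (b', e'))"
    by (metis prod.collapse)
  have bnd: "a < D i" "c < D i" "a' < D i" "c' < D i"
    "b < D (mps_nxt n i)" "e < D (mps_nxt n i)" "b' < D (mps_nxt n i)" "e' < D (mps_nxt n i)"
    using P Q by (auto simp: PQ bond_pairs_def)
  have "integrable (site_measure i) (\<lambda>y. site_transfer_pair k m i y P Q) \<and>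
        integral\<^sup>L (site_measure i) (\<lambda>y. site_transfer_pair k m i y P Q) =
          (\<Sum>\<pi>\<in>{0, 1, 2}. pair_coef k m i \<pi> * pairing \<pi> P * pairing \<pi> Q)" (is "?int \<and> ?eq")
  proof (cases "i = k"; cases "i = m")
    assume "i = k" "i = m"
    then show ?thesis
      by (simp add: site_transfer_pair_def site_transfer_def pairing_weight_def pairing_def diag_ind_def PQ
          integrable_site_measure_const)
  next
    assume "i = k" "i \<noteq> m"
    then show ?thesis
      using integrable_site_moment2[OF i bnd(3,7,4,8)] integral_site_moment2[OF i bnd(3,7,4,8), of x x']
      by (auto simp: site_transfer_pair_def site_transfer_def pairing_weight_def pairing_def diag_ind_def
          PQ bond_cov_def \<gamma>_def)
  next
    assume "i \<noteq> k" "i = m"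
    then show ?thesis
      using integrable_site_moment2[OF i bnd(1,5,2,6)] integral_site_moment2[OF i bnd(1,5,2,6), of x x']
      by (auto simp: site_transfer_pair_def site_transfer_def pairing_weight_def pairing_def diag_ind_def
          PQ bond_cov_def \<gamma>_def)
  next
    assume ik: "i \<noteq> k" and im: "i \<noteq> m"
    have "(\<lambda>y. site_transfer_pair k m i y P Q) = (\<lambda>y. mps_site d phi x i y a b * mps_site d phi x' i y c e *
            mps_site d phi x i y a' b' * mps_site d phi x' i y c' e')"
      using ik im by (simp add: site_transfer_pair_def site_transfer_def PQ mult.assoc)
    then show ?thesis
      using integrable_site_moment4[OF i bnd(1,5,2,6,3,7,4,8), of x x' x x']
        integral_site_moment4[OF i bnd(1,5,2,6,3,7,4,8), of x x' x x']
      unfolding PQ pairings_off_site[OF ik im] by simp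
  qed
  then show ?int and ?eq by auto
qed

lemma site_transfer_restrict:
  assumes "i < n" "p \<in> bond_pairs D i" "q \<in> bond_pairs D (mps_nxt n i)"
  shows "site_transfer d phi x x' k i (restrict A (block i)) p q = site_transfer d phi x x' k i A p q"
  using assms by (cases p, cases q) (simp add: site_transfer_def bond_pairs_def mps_site_restrict)

lemma site_transfer_pair_restrict:
  assumes "i < n" "P \<in> bond_pairs D i \<times> bond_pairs D i"
    "Q \<in> bond_pairs D (mps_nxt n i) \<times> bond_pairs D (mps_nxt n i)"
  shows "site_transfer_pair k m i (restrict A (block i)) P Q = site_transfer_pair k m i A P Q"
  using assms by (auto simp: site_transfer_pair_def site_transfer_restrict mem_Times_iff)

lemma
  fixes g :: "nat \<Rightarrow> (nat \<times> nat \<times> nat \<times> nat \<Rightarrow> real) \<Rightarrow> real"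
  assumes g: "\<And>j. j < n \<Longrightarrow> integrable (site_measure j) (g j)"
  shows integrable_prod_sites: "integrable \<mu> (\<lambda>A. \<Prod>j<n. g j (restrict A (block j)))"
    and integral_prod_sites:
      "integral\<^sup>L \<mu> (\<lambda>A. \<Prod>j<n. g j (restrict A (block j))) = (\<Prod>j<n. integral\<^sup>L (site_measure j) (g j))"
  using integrable_PiM_prod_blocks[of "\<lambda>\<iota>. centered_normal (sd \<iota>)" idx "{..<n}" block g]
    integral_PiM_prod_blocks[of "\<lambda>\<iota>. centered_normal (sd \<iota>)" idx "{..<n}" block g]
    g borel_measurable_integrable[OF g]
  by (simp_all add: prob_space_centered_normal sd_pos finite_idx block_subset disjoint_family_block)

lemma
  fixes g :: "'u \<Rightarrow> nat \<Rightarrow> (nat \<times> nat \<times> nat \<times> nat \<Rightarrow> real) \<Rightarrow> real"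
  assumes g: "\<And>u j. u \<in> U \<Longrightarrow> j < n \<Longrightarrow> integrable (site_measure j) (g u j)"
  shows integrable_sum_prod_sites: "integrable \<mu> (\<lambda>A. \<Sum>u\<in>U. \<Prod>j<n. g u j (restrict A (block j)))"
    and integral_sum_prod_sites: "integral\<^sup>L \<mu> (\<lambda>A. \<Sum>u\<in>U. \<Prod>j<n. g u j (restrict A (block j))) =
      (\<Sum>u\<in>U. \<Prod>j<n. integral\<^sup>L (site_measure j) (g u j))"
  using integrable_prod_sites[OF g] integral_prod_sites[OF g]
  by (simp_all add: Bochner_Integration.integrable_sum Bochner_Integration.integral_sum)

lemma PiE_mem_mps_nxt: "u \<in> PiE {..<n} V \<Longrightarrow> j < n \<Longrightarrow> u j \<in> V j \<and> u (mps_nxt n j) \<in> V (mps_nxt n j)"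
  using mps_nxt_less[of j n] by (auto simp: PiE_iff)

lemma
  assumes k: "k < n"
  shows integrable_ntk_trace: "integrable \<mu> (ntk_trace n d phi D x x' k)"
    and integral_ntk_trace: "integral\<^sup>L \<mu> (ntk_trace n d phi D x x' k) =
      (\<Prod>i<n. if i = k then 1 else var i * \<gamma> i) * (\<Prod>j<n. real (D j))"
proof -
  define g where "g u j y = site_transfer d phi x x' k j y (u j) (u (mps_nxt n j))" for u j y
  have T: "ntk_trace n d phi D x x' k =
           (\<lambda>A. \<Sum>u\<in>PiE {..<n} (bond_pairs D). \<Prod>j<n. g u j (restrict A (block j)))"
    unfolding ntk_trace_def g_def
    by (intro ext sum.cong refl prod.cong) (auto simp: site_transfer_restrict PiE_mem_mps_nxt)
  have g_int: "integrable (site_measure j) (g u j)"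
    and g_integral: "integral\<^sup>L (site_measure j) (g u j) =
       (if j = k then 1 else var j * \<gamma> j) * diag_ind (u j) * diag_ind (u (mps_nxt n j))"
    if "u \<in> PiE {..<n} (bond_pairs D)" "j < n" for u j
    using integrable_site_transfer integral_site_transfer PiE_mem_mps_nxt[OF that] that(2)
    unfolding g_def by auto
  show "integrable \<mu> (ntk_trace n d phi D x x' k)"
    unfolding T using g_int by (rule integrable_sum_prod_sites)
  have "integral\<^sup>L \<mu> (ntk_trace n d phi D x x' k) =
        (\<Sum>u\<in>PiE {..<n} (bond_pairs D). \<Prod>j<n. integral\<^sup>L (site_measure j) (g u j))"
    unfolding T by (rule integral_sum_prod_sites[OF g_int])
  also have "\<dots> = (\<Sum>u\<in>PiE {..<n} (bond_pairs D). \<Prod>j<n. (if j = k then 1 else var j * \<gamma> j) *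
           diag_ind (u j) * diag_ind (u (mps_nxt n j)))"
    by (intro sum.cong prod.cong refl) (simp add: g_integral)
  also have "\<dots> = (\<Sum>\<pi>\<in>PiE {..<n} (\<lambda>_. {0::nat}). (\<Prod>i<n. if i = k then 1 else var i * \<gamma> i) *
                    (\<Prod>j<n. \<Sum>p\<in>bond_pairs D j. diag_ind p * diag_ind p))"
    by (rule sum_PiE_cyclic_separable[where w="\<lambda>_. diag_ind"]) (auto simp: bond_pairs_def)
  also have "\<dots> = (\<Prod>i<n. if i = k then 1 else var i * \<gamma> i) * (\<Prod>j<n. real (D j))"
    by (simp add: sum_bond_pairs_diag_ind)
  finally show "integral\<^sup>L \<mu> (ntk_trace n d phi D x x' k) =
      (\<Prod>i<n. if i = k then 1 else var i * \<gamma> i) * (\<Prod>j<n. real (D j))" .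
qed

lemma ntk_trace_product:
  "ntk_trace n d phi D x x' k A * ntk_trace n d phi D x x' m A =
   (\<Sum>z\<in>PiE {..<n} (\<lambda>i. bond_pairs D i \<times> bond_pairs D i).
      \<Prod>j<n. site_transfer_pair k m j (restrict A (block j)) (z j) (z (mps_nxt n j)))"
proof -
  have "ntk_trace n d phi D x x' k A * ntk_trace n d phi D x x' m A =
    (\<Sum>u\<in>PiE {..<n} (bond_pairs D). \<Sum>u'\<in>PiE {..<n} (bond_pairs D).
       (\<Prod>i<n. site_transfer d phi x x' k i A (u i) (u (mps_nxt n i))) *
       (\<Prod>i<n. site_transfer d phi x x' m i A (u' i) (u' (mps_nxt n i))))"
    unfolding ntk_trace_def by (rule sum_product)
  also have "\<dots> = (\<Sum>z\<in>PiE {..<n} (\<lambda>i. bond_pairs D i \<times> bond_pairs D i).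
       (\<Prod>i<n. site_transfer d phi x x' k i A ((\<lambda>i\<in>{..<n}. fst (z i)) i) ((\<lambda>i\<in>{..<n}. fst (z i)) (mps_nxt n i))) *
       (\<Prod>i<n. site_transfer d phi x x' m i A ((\<lambda>i\<in>{..<n}. snd (z i)) i) ((\<lambda>i\<in>{..<n}. snd (z i)) (mps_nxt n i))))"
    by (rule sum_PiE_pairs) (auto simp: bond_pairs_def)
  also have "\<dots> = (\<Sum>z\<in>PiE {..<n} (\<lambda>i. bond_pairs D i \<times> bond_pairs D i).
                     \<Prod>j<n. site_transfer_pair k m j A (z j) (z (mps_nxt n j)))"
    unfolding site_transfer_pair_def prod.distrib[symmetric]
    by (intro sum.cong refl prod.cong) (simp add: mps_nxt_less)
  also have "\<dots> = (\<Sum>z\<in>PiE {..<n} (\<lambda>i. bond_pairs D i \<times> bond_pairs D i).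
                     \<Prod>j<n. site_transfer_pair k m j (restrict A (block j)) (z j) (z (mps_nxt n j)))"
  proof (intro sum.cong refl prod.cong)
    fix z j assume z: "z \<in> PiE {..<n} (\<lambda>i. bond_pairs D i \<times> bond_pairs D i)" and "j \<in> {..<n}"
    then show "site_transfer_pair k m j A (z j) (z (mps_nxt n j)) =
               site_transfer_pair k m j (restrict A (block j)) (z j) (z (mps_nxt n j))"
      using PiE_mem_mps_nxt[OF z, of j] by (simp add: site_transfer_pair_restrict)
  qed
  finally show ?thesis .
qed

lemma
  assumes k: "k < n" and m: "m < n"
  shows integrable_ntk_trace_product:
      "integrable \<mu> (\<lambda>A. ntk_trace n d phi D x x' k A * ntk_trace n d phi D x x' m A)"
    and integral_ntk_trace_product:
      "integral\<^sup>L \<mu> (\<lambda>A. ntk_trace n d phi D x x' k A * ntk_trace n d phi D x x' m A) =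
       (\<Sum>\<pi>\<in>PiE {..<n} (\<lambda>_. {0::nat, 1, 2}). (\<Prod>i<n. pair_coef k m i (\<pi> i)) *
          (\<Prod>j<n. if \<pi> j = \<pi> (mps_prv n j) then real (D j) ^ 2 else real (D j)))"
proof -
  define g where "g z j y = site_transfer_pair k m j y (z j) (z (mps_nxt n j))" for z j y
  let ?Z = "PiE {..<n} (\<lambda>i. bond_pairs D i \<times> bond_pairs D i)"
  have TT: "(\<lambda>A. ntk_trace n d phi D x x' k A * ntk_trace n d phi D x x' m A) =
      (\<lambda>A. \<Sum>z\<in>?Z. \<Prod>j<n. g z j (restrict A (block j)))"
    unfolding ntk_trace_product g_def ..
  have g_int: "integrable (site_measure j) (g z j)"
    and g_integral: "integral\<^sup>L (site_measure j) (g z j) =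
       (\<Sum>\<pi>\<in>{0, 1, 2}. pair_coef k m j \<pi> * pairing \<pi> (z j) * pairing \<pi> (z (mps_nxt n j)))"
    if "z \<in> ?Z" "j < n" for z j
    using integrable_site_transfer_pair[OF that(2) PiE_mem_mps_nxt[OF that, THEN conjunct1]
          PiE_mem_mps_nxt[OF that, THEN conjunct2]]
      integral_site_transfer_pair[OF that(2) PiE_mem_mps_nxt[OF that, THEN conjunct1]
          PiE_mem_mps_nxt[OF that, THEN conjunct2]]
    unfolding g_def by simp_all
  show "integrable \<mu> (\<lambda>A. ntk_trace n d phi D x x' k A * ntk_trace n d phi D x x' m A)"
    unfolding TT using g_int by (rule integrable_sum_prod_sites)
  have "integral\<^sup>L \<mu> (\<lambda>A. ntk_trace n d phi D x x' k A * ntk_trace n d phi D x x' m A) =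
        (\<Sum>z\<in>?Z. \<Prod>j<n. integral\<^sup>L (site_measure j) (g z j))"
    unfolding TT by (rule integral_sum_prod_sites[OF g_int])
  also have "\<dots> = (\<Sum>z\<in>?Z. \<Prod>j<n. \<Sum>\<pi>\<in>{0, 1, 2}.
                     pair_coef k m j \<pi> * pairing \<pi> (z j) * pairing \<pi> (z (mps_nxt n j)))"
    by (intro sum.cong prod.cong refl) (simp only: g_integral lessThan_iff)
  also have "\<dots> = (\<Sum>\<pi>\<in>PiE {..<n} (\<lambda>_. {0::nat, 1, 2}). (\<Prod>i<n. pair_coef k m i (\<pi> i)) *
              (\<Prod>j<n. \<Sum>P\<in>bond_pairs D j \<times> bond_pairs D j. pairing (\<pi> j) P * pairing (\<pi> (mps_prv n j)) P))"
    by (rule sum_PiE_cyclic_separable[where c="pair_coef k m" and w=pairing and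
          \<Phi>="\<lambda>j p q. \<Sum>\<pi>\<in>{0, 1, 2}. pair_coef k m j \<pi> * pairing \<pi> p * pairing \<pi> q"])
       (simp_all add: bond_pairs_def)
  also have "\<dots> = (\<Sum>\<pi>\<in>PiE {..<n} (\<lambda>_. {0::nat, 1, 2}). (\<Prod>i<n. pair_coef k m i (\<pi> i)) *
          (\<Prod>j<n. if \<pi> j = \<pi> (mps_prv n j) then real (D j) ^ 2 else real (D j)))"
    by (intro sum.cong refl arg_cong2[where f="(*)"] prod.cong sum_pairing_product)
       (auto simp: PiE_iff mps_prv_less)
  finally show "integral\<^sup>L \<mu> (\<lambda>A. ntk_trace n d phi D x x' k A * ntk_trace n d phi D x x' m A) =
       (\<Sum>\<pi>\<in>PiE {..<n} (\<lambda>_. {0::nat, 1, 2}). (\<Prod>i<n. pair_coef k m i (\<pi> i)) *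
          (\<Prod>j<n. if \<pi> j = \<pi> (mps_prv n j) then real (D j) ^ 2 else real (D j)))" .
qed

abbreviation "limit_coef \<equiv> pairing_weight (\<lambda>i. (\<sigma> i)\<^sup>2) \<alpha> \<beta> \<gamma>"

definition "limit_term k = \<gamma> k * (\<Prod>l\<in>{..<n} - {k}. (\<sigma> l)\<^sup>2 * \<gamma> l)"

text \<open>Each bond at which the pairing type changes contributes \<open>1 / D\<^sub>j\<close> instead of \<open>1\<close>; this is
  where the fluctuations of the kernel vanish.\<close>
definition "mismatch_factor \<pi> j = (if \<pi> j = \<pi> (mps_prv n j) then 1 else 1 / real (D j))"

abbreviation "pairing_configs \<equiv> PiE {..<n} (\<lambda>_. {0::nat, 1, 2})"

abbreviation "all_diagonal \<equiv> (\<lambda>i\<in>{..<n}. 0::nat)"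

definition "ntk_remainder = (\<Sum>k<n. \<Sum>m<n. \<Sum>\<pi>\<in>pairing_configs - {all_diagonal}.
   \<gamma> k * \<gamma> m * (\<Prod>i<n. limit_coef k m i (\<pi> i)) * (\<Prod>j<n. mismatch_factor \<pi> j))"

lemma mps_ntk_eq: "mps_ntk n d phi D A x x' = (\<Sum>k<n. \<eta> k * (\<gamma> k * ntk_trace n d phi D x x' k A))"
  unfolding mps_ntk_eq_trace \<eta>_def \<gamma>_def ..

lemma prod_\<eta>_prod_D: "(\<Prod>i<n. \<eta> i) * (\<Prod>j<n. real (D j)) = 1"
proof -
  define s where "s j = sqrt (real (D j))" for j
  have s_pos: "s j > 0" if "j < n" for j using D_pos[OF that] by (simp add: s_def)
  have \<eta>: "\<eta> i = inverse (s i) * inverse (s (mps_nxt n i))" for i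
    by (simp add: \<eta>_def s_def real_sqrt_mult divide_inverse)
  have "real (D j) = s j * s j" for j
    by (simp add: s_def)
  then have "(\<Prod>i<n. \<eta> i) * (\<Prod>j<n. real (D j)) =
        (\<Prod>i<n. inverse (s i)) * (\<Prod>i<n. inverse (s (mps_nxt n i))) * ((\<Prod>j<n. s j) * (\<Prod>j<n. s j))"
    by (simp add: \<eta> prod.distrib)
  also have "\<dots> = (\<Prod>i<n. inverse (s i) * s i) * (\<Prod>i<n. inverse (s i) * s i)"
    by (simp add: prod_reindex_mps_nxt[of "\<lambda>i. inverse (s i)"] prod.distrib mult_ac)
  also have "(\<Prod>i<n. inverse (s i) * s i) = 1"
    using s_pos by (intro prod.neutral) (simp add: less_imp_neq[symmetric])
  finally show ?thesis by simp
qed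

lemma
  shows integrable_mps_ntk: "integrable \<mu> (\<lambda>A. mps_ntk n d phi D A x x')"
    and integral_mps_ntk: "integral\<^sup>L \<mu> (\<lambda>A. mps_ntk n d phi D A x x') = (\<Sum>k<n. limit_term k)"
proof -
  show "integrable \<mu> (\<lambda>A. mps_ntk n d phi D A x x')"
    unfolding mps_ntk_eq
    by (intro Bochner_Integration.integrable_sum integrable_mult_right integrable_ntk_trace) auto
  have "\<eta> k * (\<gamma> k * ((\<Prod>i<n. if i = k then 1 else var i * \<gamma> i) * (\<Prod>j<n. real (D j)))) = limit_term k"
    if k: "k < n" for k
  proof -
    have "\<eta> k * (\<Prod>i<n. if i = k then 1 else var i * \<gamma> i) =
          (\<Prod>i<n. \<eta> i) * (\<Prod>l\<in>{..<n} - {k}. (\<sigma> l)\<^sup>2 * \<gamma> l)"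
      using k by (simp add: prod_if_eq_remove var_def prod.distrib prod.remove mult_ac)
    then have "\<eta> k * (\<gamma> k * ((\<Prod>i<n. if i = k then 1 else var i * \<gamma> i) * (\<Prod>j<n. real (D j)))) =
               limit_term k * ((\<Prod>i<n. \<eta> i) * (\<Prod>j<n. real (D j)))"
      by (simp add: limit_term_def mult_ac)
    then show ?thesis
      by (simp add: prod_\<eta>_prod_D)
  qed
  then show "integral\<^sup>L \<mu> (\<lambda>A. mps_ntk n d phi D A x x') = (\<Sum>k<n. limit_term k)"
    unfolding mps_ntk_eq using integrable_ntk_trace
    by (simp add: Bochner_Integration.integral_sum integral_ntk_trace)
qed

lemma second_moment_term:
  assumes k: "k < n" and m: "m < n"
  shows "\<eta> k * \<gamma> k * (\<eta> m * \<gamma> m) * ((\<Prod>i<n. pair_coef k m i (\<pi> i)) *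
           (\<Prod>j<n. if \<pi> j = \<pi> (mps_prv n j) then real (D j) ^ 2 else real (D j))) =
         \<gamma> k * \<gamma> m * (\<Prod>i<n. limit_coef k m i (\<pi> i)) * (\<Prod>j<n. mismatch_factor \<pi> j)"
proof -
  have var_eq: "var = (\<lambda>i. (\<sigma> i)\<^sup>2 * \<eta> i)"
    by (simp add: var_def fun_eq_iff)
  have scale: "(if i = k then \<eta> i else 1) * (if i = m then \<eta> i else 1) * pair_coef k m i (\<pi> i) =
               (\<eta> i)\<^sup>2 * limit_coef k m i (\<pi> i)" for i
    using pairing_weight_scale[of i k \<eta> m "\<lambda>i. (\<sigma> i)\<^sup>2" \<alpha> \<beta> \<gamma> "\<pi> i"] by (simp add: var_eq)
  have "\<eta> k * \<eta> m * (\<Prod>i<n. pair_coef k m i (\<pi> i)) =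
        (\<Prod>i<n. if i = k then \<eta> i else 1) * (\<Prod>i<n. if i = m then \<eta> i else 1) * (\<Prod>i<n. pair_coef k m i (\<pi> i))"
    using k m by (simp add: prod.delta)
  also have "\<dots> = (\<Prod>i<n. (\<eta> i)\<^sup>2) * (\<Prod>i<n. limit_coef k m i (\<pi> i))"
    by (simp only: scale flip: prod.distrib)
  finally have coef: "\<eta> k * \<eta> m * (\<Prod>i<n. pair_coef k m i (\<pi> i)) =
                      (\<Prod>i<n. (\<eta> i)\<^sup>2) * (\<Prod>i<n. limit_coef k m i (\<pi> i))" .
  have "(\<Prod>j<n. if \<pi> j = \<pi> (mps_prv n j) then real (D j) ^ 2 else real (D j)) =
        (\<Prod>j<n. (real (D j))\<^sup>2 * mismatch_factor \<pi> j)"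
    using D_pos by (intro prod.cong refl) (auto simp: mismatch_factor_def power2_eq_square)
  then have bonds: "(\<Prod>j<n. if \<pi> j = \<pi> (mps_prv n j) then real (D j) ^ 2 else real (D j)) =
        (\<Prod>j<n. (real (D j))\<^sup>2) * (\<Prod>j<n. mismatch_factor \<pi> j)"
    by (simp add: prod.distrib)
  have "(\<Prod>i<n. (\<eta> i)\<^sup>2) * (\<Prod>j<n. (real (D j))\<^sup>2) = ((\<Prod>i<n. \<eta> i) * (\<Prod>j<n. real (D j)))\<^sup>2"
    by (simp add: power_mult_distrib prod_power_distrib)
  then have one: "(\<Prod>i<n. (\<eta> i)\<^sup>2) * (\<Prod>j<n. (real (D j))\<^sup>2) = 1"
    by (simp add: prod_\<eta>_prod_D)
  have "\<eta> k * \<gamma> k * (\<eta> m * \<gamma> m) * ((\<Prod>i<n. pair_coef k m i (\<pi> i)) *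
          (\<Prod>j<n. if \<pi> j = \<pi> (mps_prv n j) then real (D j) ^ 2 else real (D j))) =
        \<gamma> k * \<gamma> m * (\<Prod>i<n. limit_coef k m i (\<pi> i)) * (\<Prod>j<n. mismatch_factor \<pi> j) *
        ((\<Prod>i<n. (\<eta> i)\<^sup>2) * (\<Prod>j<n. (real (D j))\<^sup>2))"
    using coef bonds by (simp add: mult_ac)
  then show ?thesis
    unfolding one by simp
qed

lemma limit_coef_all_diagonal:
  assumes "k < n" "m < n"
  shows "\<gamma> k * \<gamma> m * (\<Prod>i<n. limit_coef k m i 0) * (\<Prod>j<n. mismatch_factor all_diagonal j) =
         limit_term k * limit_term m"
proof -
  have "(\<Prod>i<n. limit_coef k m i 0) =
        (\<Prod>i<n. if i = k then 1 else (\<sigma> i)\<^sup>2 * \<gamma> i) * (\<Prod>i<n. if i = m then 1 else (\<sigma> i)\<^sup>2 * \<gamma> i)"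
    by (simp add: pairing_weight_def prod.distrib)
  moreover have "(\<Prod>j<n. mismatch_factor all_diagonal j) = 1"
    by (intro prod.neutral) (simp add: mismatch_factor_def mps_prv_less)
  ultimately show ?thesis
    by (simp add: prod_if_eq_remove limit_term_def mult_ac)
qed

lemma
  shows integrable_mps_ntk_sq: "integrable \<mu> (\<lambda>A. (mps_ntk n d phi D A x x')\<^sup>2)"
    and integral_mps_ntk_sq:
      "integral\<^sup>L \<mu> (\<lambda>A. (mps_ntk n d phi D A x x')\<^sup>2) = (\<Sum>k<n. limit_term k)\<^sup>2 + ntk_remainder"
proof -
  have sq: "(\<lambda>A. (mps_ntk n d phi D A x x')\<^sup>2) = (\<lambda>A. \<Sum>k<n. \<Sum>m<n. (\<eta> k * \<gamma> k * (\<eta> m * \<gamma> m)) *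
              (ntk_trace n d phi D x x' k A * ntk_trace n d phi D x x' m A))"
    unfolding mps_ntk_eq power2_eq_square sum_product by (simp add: mult_ac)
  show "integrable \<mu> (\<lambda>A. (mps_ntk n d phi D A x x')\<^sup>2)"
    unfolding sq
    by (intro Bochner_Integration.integrable_sum integrable_mult_right integrable_ntk_trace_product) auto
  have "integral\<^sup>L \<mu> (\<lambda>A. (mps_ntk n d phi D A x x')\<^sup>2) =
        (\<Sum>k<n. \<Sum>m<n. \<Sum>\<pi>\<in>pairing_configs.
           \<gamma> k * \<gamma> m * (\<Prod>i<n. limit_coef k m i (\<pi> i)) * (\<Prod>j<n. mismatch_factor \<pi> j))"
    unfolding sq
    by (subst integral_sum_sum)
       (auto intro!: integrable_mult_right integrable_ntk_trace_product
             simp: integral_ntk_trace_product sum_distrib_left second_moment_term intro: sum.cong)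
  also have "\<dots> = (\<Sum>k<n. \<Sum>m<n. limit_term k * limit_term m) + ntk_remainder"
  proof -
    have "(\<Sum>\<pi>\<in>pairing_configs. \<gamma> k * \<gamma> m * (\<Prod>i<n. limit_coef k m i (\<pi> i)) * (\<Prod>j<n. mismatch_factor \<pi> j)) =
          limit_term k * limit_term m + (\<Sum>\<pi>\<in>pairing_configs - {all_diagonal}.
            \<gamma> k * \<gamma> m * (\<Prod>i<n. limit_coef k m i (\<pi> i)) * (\<Prod>j<n. mismatch_factor \<pi> j))"
      if "k < n" "m < n" for k m
      by (subst sum.remove[of _ all_diagonal]) (auto simp: limit_coef_all_diagonal[OF that] finite_PiE)
    then show ?thesis
      unfolding ntk_remainder_def by (simp add: sum.distrib)
  qed
  also have "(\<Sum>k<n. \<Sum>m<n. limit_term k * limit_term m) = (\<Sum>k<n. limit_term k)\<^sup>2"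
    by (simp add: power2_eq_square sum_product)
  finally show "integral\<^sup>L \<mu> (\<lambda>A. (mps_ntk n d phi D A x x')\<^sup>2) = (\<Sum>k<n. limit_term k)\<^sup>2 + ntk_remainder" .
qed

lemma mismatch_of_nonzero_limit_coef:
  assumes \<pi>: "\<pi> \<in> pairing_configs - {all_diagonal}" and k: "k < n"
    and nz: "(\<Prod>i<n. limit_coef k m i (\<pi> i)) \<noteq> 0"
  shows "\<exists>j<n. \<pi> j \<noteq> \<pi> (mps_prv n j)"
proof (rule ccontr)
  assume "\<not> (\<exists>j<n. \<pi> j \<noteq> \<pi> (mps_prv n j))"
  then have const: "\<pi> j = \<pi> 0" if "j < n" for j
    using cyclic_invariant_const[of n \<pi> j] that by blast
  have "\<pi> 0 \<noteq> 0"
  proof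
    assume "\<pi> 0 = 0"
    then have "\<pi> = all_diagonal"
      using \<pi> const by (auto simp: PiE_iff extensional_def fun_eq_iff)
    then show False using \<pi> by simp
  qed
  then have "limit_coef k m k (\<pi> k) = 0"
    using const[OF k] by (simp add: pairing_weight_eq_0)
  then show False
    using nz k by (simp add: prod_zero_iff)
qed

lemma mismatch_factor_bounds: "j < n \<Longrightarrow> 0 \<le> mismatch_factor \<pi> j \<and> mismatch_factor \<pi> j \<le> 1"
  using D_pos[of j] by (auto simp: mismatch_factor_def)

lemma prod_mismatch_factor_le:
  assumes N: "N \<ge> 1" and DN: "\<And>j. j < n \<Longrightarrow> N \<le> D j" and j0: "j0 < n" "\<pi> j0 \<noteq> \<pi> (mps_prv n j0)"
  shows "(\<Prod>j<n. mismatch_factor \<pi> j) \<le> 1 / real N"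
proof -
  have "(\<Prod>j<n. mismatch_factor \<pi> j) = mismatch_factor \<pi> j0 * (\<Prod>j\<in>{..<n} - {j0}. mismatch_factor \<pi> j)"
    using j0 by (simp add: prod.remove)
  also have "\<dots> \<le> mismatch_factor \<pi> j0"
    using mismatch_factor_bounds j0(1) by (intro mult_left_le prod_le_1) auto
  also have "\<dots> \<le> 1 / real N"
    using j0 DN[OF j0(1)] N by (simp add: mismatch_factor_def frac_le)
  finally show ?thesis .
qed

lemma ntk_remainder_le:
  assumes N: "N \<ge> 1" and DN: "\<And>j. j < n \<Longrightarrow> N \<le> D j"
  shows "ntk_remainder \<le> ntk_var_bound n d phi \<sigma> x x' / real N"
proof -
  have term_le: "\<gamma> k * \<gamma> m * (\<Prod>i<n. limit_coef k m i (\<pi> i)) * (\<Prod>j<n. mismatch_factor \<pi> j) \<le>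
                 \<bar>\<gamma> k * \<gamma> m * (\<Prod>i<n. limit_coef k m i (\<pi> i))\<bar> / real N"
    if k: "k < n" and \<pi>: "\<pi> \<in> pairing_configs - {all_diagonal}" for k m \<pi>
  proof (cases "(\<Prod>i<n. limit_coef k m i (\<pi> i)) = 0")
    case False
    then obtain j0 where j0: "j0 < n" "\<pi> j0 \<noteq> \<pi> (mps_prv n j0)"
      using mismatch_of_nonzero_limit_coef[OF \<pi> k False] by blast
    have "(\<Prod>j<n. mismatch_factor \<pi> j) \<le> 1 / real N"
      using prod_mismatch_factor_le[OF N _ j0] DN by blast
    moreover have "0 \<le> (\<Prod>j<n. mismatch_factor \<pi> j)"
      using mismatch_factor_bounds by (intro prod_nonneg) auto
    ultimately have "a * (\<Prod>j<n. mismatch_factor \<pi> j) \<le> \<bar>a\<bar> * (1 / real N)" for a :: real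
      by (meson abs_ge_self abs_ge_zero mult_mono)
    then show ?thesis by simp
  next
    case True
    then show ?thesis by (simp only: mult_zero_right mult_zero_left abs_zero div_0)
  qed
  have "ntk_remainder \<le> (\<Sum>k<n. \<Sum>m<n. \<Sum>\<pi>\<in>pairing_configs - {all_diagonal}.
           \<bar>\<gamma> k * \<gamma> m * (\<Prod>i<n. limit_coef k m i (\<pi> i))\<bar> / real N)"
    unfolding ntk_remainder_def by (intro sum_mono term_le) simp_all
  also have "\<dots> = ntk_var_bound n d phi \<sigma> x x' / real N"
    by (simp add: ntk_var_bound_def \<alpha>_def[abs_def] \<beta>_def[abs_def] \<gamma>_def[abs_def] sum_divide_distrib)
  finally show ?thesis .
qed

lemma
  shows integrable_mps_ntk_deviation_sq:
      "integrable \<mu> (\<lambda>A. (mps_ntk n d phi D A x x' - (\<Sum>k<n. limit_term k))\<^sup>2)"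
    and integral_mps_ntk_deviation_sq:
      "integral\<^sup>L \<mu> (\<lambda>A. (mps_ntk n d phi D A x x' - (\<Sum>k<n. limit_term k))\<^sup>2) = ntk_remainder"
proof -
  interpret prob_space \<mu> by (rule prob_space_\<mu>)
  let ?K = "\<lambda>A. mps_ntk n d phi D A x x'" and ?L = "\<Sum>k<n. limit_term k"
  have eq: "(\<lambda>A. (?K A - ?L)\<^sup>2) = (\<lambda>A. (?K A)\<^sup>2 - 2 * ?L * ?K A + ?L\<^sup>2)"
    by (simp add: power2_eq_square algebra_simps)
  show "integrable \<mu> (\<lambda>A. (?K A - ?L)\<^sup>2)"
    unfolding eq using integrable_mps_ntk_sq integrable_mps_ntk by simp
  show "integral\<^sup>L \<mu> (\<lambda>A. (?K A - ?L)\<^sup>2) = ntk_remainder"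
    unfolding eq using integrable_mps_ntk_sq integrable_mps_ntk
    by (simp add: integral_mps_ntk integral_mps_ntk_sq prob_space, simp add: power2_eq_square)
qed

lemma mps_ntk_deviation_prob_le:
  assumes \<epsilon>: "\<epsilon> > 0" and N: "N \<ge> 1" and DN: "\<And>j. j < n \<Longrightarrow> N \<le> D j"
  shows "measure \<mu> {A \<in> space \<mu>. \<epsilon> < \<bar>mps_ntk n d phi D A x x' - (\<Sum>k<n. limit_term k)\<bar>} \<le>
         ntk_var_bound n d phi \<sigma> x x' / real N / \<epsilon>\<^sup>2"
proof -
  interpret prob_space \<mu> by (rule prob_space_\<mu>)
  let ?X = "\<lambda>A. mps_ntk n d phi D A x x' - (\<Sum>k<n. limit_term k)"
  have X_meas: "?X \<in> borel_measurable \<mu>"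
    using borel_measurable_integrable[OF integrable_mps_ntk] by measurable
  have "measure \<mu> {A \<in> space \<mu>. \<epsilon> < \<bar>?X A\<bar>} \<le> measure \<mu> {A \<in> space \<mu>. \<epsilon> \<le> \<bar>?X A\<bar>}"
    using X_meas by (intro finite_measure_mono) auto
  also have "\<dots> \<le> integral\<^sup>L \<mu> (\<lambda>A. (?X A)\<^sup>2) / \<epsilon>\<^sup>2"
    using X_meas integrable_mps_ntk_deviation_sq \<epsilon> by (intro second_moment_method) auto
  also have "\<dots> \<le> ntk_var_bound n d phi \<sigma> x x' / real N / \<epsilon>\<^sup>2"
    using divide_right_mono[OF ntk_remainder_le[OF N DN], of "\<epsilon>\<^sup>2"]
    by (simp add: integral_mps_ntk_deviation_sq)
  finally show ?thesis .
qed

end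

section \<open>Concentration\<close>

lemma mps_ntk_concentration:
  fixes d :: "nat \<Rightarrow> nat" and phi :: "nat \<Rightarrow> real \<Rightarrow> nat \<Rightarrow> real" and x x' :: "nat \<Rightarrow> real"
  assumes "n \<ge> 1" and "\<And>i. i < n \<Longrightarrow> \<sigma> i > 0"
    and \<epsilon>: "\<epsilon> > 0" and N: "N \<ge> 1" and DN: "\<forall>j<n. N \<le> D j"
    and small: "ntk_var_bound n d phi \<sigma> x x' / real N / \<epsilon>\<^sup>2 < \<delta>"
  defines "L \<equiv> (\<Sum>k<n. feat_dot d phi k (x k) (x' k) *
                 (\<Prod>l\<in>{..<n} - {k}. (\<sigma> l)\<^sup>2 * feat_dot d phi l (x l) (x' l)))"
  shows "(\<lambda>A. mps_ntk n d phi D A x x') \<in> borel_measurable (mps_init n d \<sigma> D) \<and>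
         measure (mps_init n d \<sigma> D) {A \<in> space (mps_init n d \<sigma> D). \<epsilon> < \<bar>mps_ntk n d phi D A x x' - L\<bar>} < \<delta>"
proof -
  interpret mps_ntk_setting n d phi \<sigma> x x' D
    using assms(1,2) DN N by unfold_locales auto
  have "L = (\<Sum>k<n. limit_term k)"
    unfolding L_def limit_term_def \<gamma>_def ..
  then show ?thesis
    using borel_measurable_integrable[OF integrable_mps_ntk] mps_ntk_deviation_prob_le[OF \<epsilon> N] DN small
    unfolding mps_init_eq by fastforce
qed

lemma ex_nat_quotient_less:
  fixes C \<epsilon> \<delta> :: real
  assumes "\<epsilon> > 0" "\<delta> > 0"
  shows "\<exists>N::nat. N \<ge> 1 \<and> C / real N / \<epsilon>\<^sup>2 < \<delta>"
proof -
  obtain N :: nat where N: "max 1 (C / (\<epsilon>\<^sup>2 * \<delta>)) < real N"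
    using reals_Archimedean2 by blast
  then have "C < real N * (\<epsilon>\<^sup>2 * \<delta>)"
    using assms by (simp add: divide_less_eq)
  then show ?thesis
    using N assms by (intro exI[of _ N]) (simp add: divide_less_eq mult_ac)
qed

theorem theorem2:
  fixes n :: nat and d :: "nat \<Rightarrow> nat" and phi :: "nat \<Rightarrow> real \<Rightarrow> nat \<Rightarrow> real"
    and \<sigma> :: "nat \<Rightarrow> real" and x x' :: "nat \<Rightarrow> real"
  assumes "n \<ge> 1"
    and "\<And>i. i < n \<Longrightarrow> \<sigma> i > 0"
  defines "L \<equiv> (\<Sum>k<n. feat_dot d phi k (x k) (x' k) *
                 (\<Prod>l\<in>{..<n} - {k}. (\<sigma> l)\<^sup>2 * feat_dot d phi l (x l) (x' l)))"
  shows "\<forall>\<epsilon>>0. \<forall>\<delta>>0. seq_eventually n (\<lambda>_. 0) (\<lambda>D.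
           (\<lambda>A. mps_ntk n d phi D A x x') \<in> borel_measurable (mps_init n d \<sigma> D) \<and>
           measure (mps_init n d \<sigma> D)
             {A \<in> space (mps_init n d \<sigma> D). \<epsilon> < \<bar>mps_ntk n d phi D A x x' - L\<bar>} < \<delta>)"
proof (intro allI impI)
  fix \<epsilon> \<delta> :: real assume \<epsilon>: "\<epsilon> > 0" and \<delta>: "\<delta> > 0"
  obtain N :: nat where N: "N \<ge> 1" "ntk_var_bound n d phi \<sigma> x x' / real N / \<epsilon>\<^sup>2 < \<delta>"
    using ex_nat_quotient_less[OF \<epsilon> \<delta>] by blast
  show "seq_eventually n (\<lambda>_. 0) (\<lambda>D.
           (\<lambda>A. mps_ntk n d phi D A x x') \<in> borel_measurable (mps_init n d \<sigma> D) \<and>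
           measure (mps_init n d \<sigma> D)
             {A \<in> space (mps_init n d \<sigma> D). \<epsilon> < \<bar>mps_ntk n d phi D A x x' - L\<bar>} < \<delta>)"
    unfolding L_def
    by (rule seq_eventually_uniform[of n N], rule mps_ntk_concentration[OF assms(1,2) \<epsilon> N(1) _ N(2)])
qed

end
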